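(* Let $\lambda$ be a partition and $T\in\mathsf{HVT}(\lambda)$. Then the multiset uncrowding map $\tilde{\mathcal U}(T)=(\tilde P(T),\tilde Q(T))$ is well-defined: $\tilde P(T)$ is a multiset-valued tableau of some shape $\mu\supseteq\lambda$ and $\tilde Q(T)$ is a flagged increasing tableau of shape $\mu/\lambda$.
   Context: French notation: row $1$ is the bottom row, rows numbered upward, columns left to right; cell $(r,c)$ is in row $r$, column $c$. A semistandard tableau of hook shape consists of a hook entry $x$, a leg $\ell_1<\dots<\ell_p$ above $x$ with $x<\ell_1$, and an arm $a_1\le\dots\le a_q$ to the right of $x$ with $x\le a_1$ ($p,q\ge0$, positive integers). A (semistandard) hook-valued tableau (HVT) of partition shape $\lambda$ is a filling of the cells of $\lambda$ by such hook tableaux with $\max(A)\le\min(B)$ whenever the cell of $A$ is left of that of $B$ in the same row, and $\max(A)<\min(C)$ whenever the cell of $A$ is below that of $C$ in the same column. $\mathsf L_T(r,c),\mathsf A_T(r,c)$ denote leg and arm of cell $(r,c)$. Leg excess = total number of leg entries; a multiset-valued tableau is an HVT of leg excess $0$. A flagged increasing tableau of shape $\mu/\lambda$ ($\lambda\subseteq\mu$ partitions with $\lambda_1=\mu_1$) is a filling of $\mu/\lambda$ by positive integers strictly increasing along rows and columns such that every entry in row $i$ is at most $i-1$. Multiset uncrowding bumping $\tilde{\mathcal V}_b$: if the leg excess of $T$ is $0$, return $T$. Otherwise let $r$ be the topmost row containing a cell with nonempty leg; in that row let $(r,c)$ be the cell whose leg contains the largest value (the rightmost such cell); let $\ell$ be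 its largest leg entry and $a$ its rightmost arm entry. In row $r+1$ find the leftmost number strictly greater than $\ell$. If none exists, attach an empty cell at the end of row $r+1$, call it $(r+1,\tilde c)$, and let $k$ be empty; otherwise let $k$ be this number and $(r+1,\tilde c)$ its cell. (a) If $\tilde c\ne c$: remove $\ell$ from $\mathsf L_T(r,c)$, put $\ell$ in place of $k$ (as hook entry if the cell is new), and attach $k$ (if nonempty) to the leg of $(r+1,\tilde c)$. (b) If $\tilde c=c$: remove the multiset $\{z\in\mathsf A_T(r,c):\ell\le z\le a\}$ from $\mathsf A_T(r,c)$ and $\ell$ from $\mathsf L_T(r,c)$, insert that multiset into $\mathsf A_T(r+1,\tilde c)$, replace the hook entry of $(r+1,\tilde c)$ by $\ell$, and attach $k$ (if nonempty) to $\mathsf L_T(r+1,\tilde c)$. Multiset uncrowding insertion: $\tilde{\mathcal V}(T)=\tilde{\mathcal V}_b^d(T)$, $d\ge1$ minimal such that the shape changes or $\tilde{\mathcal V}_b^d(T)=\tilde{\mathcal V}_b^{d-1}(T)$. Multiset uncrowding map: for $T$ with leg excess $\alpha$, $\tilde P_0=T$, $\tilde Q_0$ empty of shape $\lambda/\lambda$; for $1\le i\le\alpha$, $\tilde P_i=\tilde{\mathcal V}(\tilde P_{i-1})$, and $\tilde Q_i$ is $\tilde Q_{i-1}$ with the new cell $\mathsf{shape}(\tilde P_i)/\mathsf{shape}(\tilde P_{i-1})$ added and filled with $\tilde r-r$, where $\tilde r$ is the row of the new cell and $r$ the topmost row of $\tilde P_{i-1}$ containing a cell with nonzero leg excess;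 $\tilde{\mathcal U}(T)=(\tilde P(T),\tilde Q(T)):=(\tilde P_\alpha,\tilde Q_\alpha)$. *)

theory Defs
  imports Main
begin

(* Conventions (French notation).  A tableau is a list of rows; the list
   element with index i (0-based) is row i+1 (row 1 = bottom row).  User-facing accessors use
   1-based row/column indices (r,c) as in the paper. *)

type_synonym hook = "nat \<times> nat list \<times> nat list"

definition hentry :: "hook \<Rightarrow> nat" where "hentry h = fst h"
definition hleg :: "hook \<Rightarrow> nat list" where "hleg h = fst (snd h)"
definition harm :: "hook \<Rightarrow> nat list" where "harm h = snd (snd h)"

definition hook_entries :: "hook \<Rightarrow> nat list" where
  "hook_entries h = hentry h # hleg h @ harm h"

definition hmin :: "hook \<Rightarrow> nat" where "hmin h = Min (set (hook_entries h))"
definition hmax :: "hook \<Rightarrow> nat" where "hmax h = Max (set (hook_entries h))"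

definition valid_hook :: "hook \<Rightarrow> bool" where
  "valid_hook h \<longleftrightarrow> 0 < hentry h \<and> sorted_wrt (<) (hentry h # hleg h)
      \<and> sorted (hentry h # harm h)"

type_synonym tab = "hook list list"

definition shape :: "tab \<Rightarrow> nat list" where "shape T = map length T"

definition is_partition :: "nat list \<Rightarrow> bool" where
  "is_partition p \<longleftrightarrow> sorted_wrt (\<ge>) p \<and> 0 \<notin> set p"

definition part_cells :: "nat list \<Rightarrow> (nat \<times> nat) set" where
  "part_cells p = {(r,c). 1 \<le> r \<and> r \<le> length p \<and> 1 \<le> c \<and> c \<le> p ! (r - 1)}"

definition cells :: "tab \<Rightarrow> (nat \<times> nat) set" where
  "cells T = part_cells (shape T)"

definition cell :: "tab \<Rightarrow> nat \<Rightarrow> nat \<Rightarrow> hook" where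
  "cell T r c = T ! (r - 1) ! (c - 1)"

definition is_HVT :: "tab \<Rightarrow> bool" where
  "is_HVT T \<longleftrightarrow> is_partition (shape T)
     \<and> (\<forall>(r,c)\<in>cells T. valid_hook (cell T r c))
     \<and> (\<forall>r c c'. (r,c) \<in> cells T \<longrightarrow> (r,c') \<in> cells T \<longrightarrow> c < c'
            \<longrightarrow> hmax (cell T r c) \<le> hmin (cell T r c'))
     \<and> (\<forall>r r' c. (r,c) \<in> cells T \<longrightarrow> (r',c) \<in> cells T \<longrightarrow> r < r'
            \<longrightarrow> hmax (cell T r c) < hmin (cell T r' c))"

definition leg_excess :: "tab \<Rightarrow> nat" where
  "leg_excess T = sum_list (map (\<lambda>row. sum_list (map (\<lambda>h. length (hleg h)) row)) T)"

definition is_MVT :: "tab \<Rightarrow> bool" where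
  "is_MVT T \<longleftrightarrow> is_HVT T \<and> leg_excess T = 0"

definition first_part :: "nat list \<Rightarrow> nat" where
  "first_part p = (case p of [] \<Rightarrow> 0 | x # _ \<Rightarrow> x)"

definition flagged_increasing :: "(nat \<Rightarrow> nat \<Rightarrow> nat) \<Rightarrow> nat list \<Rightarrow> nat list \<Rightarrow> bool" where
  "flagged_increasing Q la mu \<longleftrightarrow>
     is_partition la \<and> is_partition mu \<and> part_cells la \<subseteq> part_cells mu
     \<and> first_part la = first_part mu
     \<and> (\<forall>(r,c) \<in> part_cells mu - part_cells la. 0 < Q r c \<and> Q r c \<le> r - 1)
     \<and> (\<forall>r c c'. (r,c) \<in> part_cells mu - part_cells la \<longrightarrow> (r,c') \<in> part_cells mu - part_cells la
            \<longrightarrow> c < c' \<longrightarrow> Q r c < Q r c')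
     \<and> (\<forall>r r' c. (r,c) \<in> part_cells mu - part_cells la \<longrightarrow> (r',c) \<in> part_cells mu - part_cells la
            \<longrightarrow> r < r' \<longrightarrow> Q r c < Q r' c)"

definition top_leg_row :: "tab \<Rightarrow> nat" where
  "top_leg_row T = Max {r. 1 \<le> r \<and> r \<le> length T \<and> (\<exists>h\<in>set (T ! (r - 1)). hleg h \<noteq> [])}"

definition get_row :: "tab \<Rightarrow> nat \<Rightarrow> hook list" where
  "get_row T r = (if 1 \<le> r \<and> r \<le> length T then T ! (r - 1) else [])"

definition set_row :: "tab \<Rightarrow> nat \<Rightarrow> hook list \<Rightarrow> tab" where
  "set_row T r R = (if r \<le> length T then T[r - 1 := R] else T @ [R])"

definition replace_entry :: "hook \<Rightarrow> nat \<Rightarrow> nat \<Rightarrow> hook" where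
  "replace_entry h k l =
     (if hentry h = k then (l, hleg h, harm h)
      else if k \<in> set (hleg h) then (hentry h, map (\<lambda>z. if z = k then l else z) (hleg h), harm h)
      else (hentry h, hleg h, insort l (remove1 k (harm h))))"

definition add_to_leg :: "hook \<Rightarrow> nat \<Rightarrow> hook" where
  "add_to_leg h k = (hentry h, insort k (hleg h), harm h)"

definition bump :: "tab \<Rightarrow> tab" where
  "bump T =
    (let r = top_leg_row T;
         R = get_row T r;
         m = Max {Max (set (hleg h)) | h. h \<in> set R \<and> hleg h \<noteq> []};
         c = Max {j. 1 \<le> j \<and> j \<le> length R \<and> hleg (R ! (j - 1)) \<noteq> []
                     \<and> Max (set (hleg (R ! (j - 1)))) = m};
         h = R ! (c - 1);
         l = Max (set (hleg h));
         a = last (harm h);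
         R1 = get_row T (r + 1);
         J = {j. 1 \<le> j \<and> j \<le> length R1 \<and> (\<exists>z\<in>set (hook_entries (R1 ! (j - 1))). l < z)};
         isnew = (J = {});
         ct = (if isnew then length R1 + 1 else Min J);
         k = (if isnew then 0 else Min {z \<in> set (hook_entries (R1 ! (ct - 1))). l < z})
     in if ct \<noteq> c then
          (let hr = (hentry h, remove1 l (hleg h), harm h);
               hn = (if isnew then (l, [], []) else add_to_leg (replace_entry (R1 ! (ct - 1)) k l) k);
               R1' = (if isnew then R1 @ [hn] else R1[ct - 1 := hn])
           in set_row (set_row T r (R[c - 1 := hr])) (r + 1) R1')
        else
          (let M = filter (\<lambda>z. l \<le> z \<and> z \<le> a) (harm h);
               hr = (hentry h, remove1 l (hleg h), filter (\<lambda>z. \<not> (l \<le> z \<and> z \<le> a)) (harm h));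
               hn = (if isnew then (l, [], sort M)
                     else (l, insort k (hleg (R1 ! (ct - 1))), sort (harm (R1 ! (ct - 1)) @ M)));
               R1' = (if isnew then R1 @ [hn] else R1[ct - 1 := hn])
           in set_row (set_row T r (R[c - 1 := hr])) (r + 1) R1'))"

definition Vb :: "tab \<Rightarrow> tab" where
  "Vb T = (if leg_excess T = 0 then T else bump T)"

definition V_stop :: "tab \<Rightarrow> nat \<Rightarrow> bool" where
  "V_stop T d \<longleftrightarrow> shape ((Vb ^^ d) T) \<noteq> shape T \<or> (Vb ^^ d) T = (Vb ^^ (d - 1)) T"

definition V :: "tab \<Rightarrow> tab" where
  "V T = (Vb ^^ (LEAST d. 1 \<le> d \<and> V_stop T d)) T"

fun uc :: "tab \<Rightarrow> nat \<Rightarrow> tab \<times> (nat \<Rightarrow> nat \<Rightarrow> nat)" where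
  "uc T 0 = (T, (\<lambda>_ _. 0))"
| "uc T (Suc i) =
     (let P = fst (uc T i); Q = snd (uc T i); P' = V P; r = top_leg_row P
      in (P', (\<lambda>r' c'. if (r', c') \<in> cells P' - cells P then r' - r else Q r' c')))"

definition UP :: "tab \<Rightarrow> tab" where "UP T = fst (uc T (leg_excess T))"
definition UQ :: "tab \<Rightarrow> nat \<Rightarrow> nat \<Rightarrow> nat" where "UQ T = snd (uc T (leg_excess T))"

end

theory Submission
  imports Defs
begin

(* A bumping step takes the largest leg entry l of the topmost row r that carries legs and moves
   it into row r + 1: either into the leftmost cell containing an entry larger than l, whose
   smallest such entry k then becomes a leg there, or into a new cell at the end of row r + 1.
   Both moves preserve the semistandard conditions, and the number of legs drops by one exactly
   when a cell is created.  Within one insertion the leg-carrying top row climbs one row per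
   step, so the insertion ends after finitely many steps by creating one cell strictly above
   its starting row r; after leg_excess T insertions no legs are left.

   For the recording tableau, the starting rows of successive insertions weakly decrease.  If
   two consecutive insertions start in the same row, the values bumped by the second one stay
   strictly below those bumped by the first, so the second path finds a cell to bump into at
   every step where the first one did, and its new cell lies strictly higher.  Hence the entry
   (row of new cell) - (starting row) increases strictly along rows and columns of the skew
   shape, and it lies between 1 and (row - 1). *)

section \<open>Hooks and hook-valued tableaux\<close>

abbreviation entries :: "hook \<Rightarrow> nat set" where "entries h \<equiv> set (hook_entries h)"

lemma entries_eq: "entries h = insert (hentry h) (set (hleg h) \<union> set (harm h))"
  by (auto simp: hook_entries_def)

lemma hentry_in_entries: "hentry h \<in> entries h" by (simp add: entries_eq)

lemma hmax_le_iff: "hmax h \<le> b \<longleftrightarrow> (\<forall>z\<in>entries h. z \<le> b)"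
  unfolding hmax_def by (subst Max_le_iff) (auto simp: hook_entries_def)

lemma hmin_ge_iff: "b \<le> hmin h \<longleftrightarrow> (\<forall>z\<in>entries h. b \<le> z)"
  unfolding hmin_def by (subst Min_ge_iff) (auto simp: hook_entries_def)

lemma le_hmax: "z \<in> entries h \<Longrightarrow> z \<le> hmax h"
  using hmax_le_iff by blast

lemma hmin_le: "z \<in> entries h \<Longrightarrow> hmin h \<le> z"
  using hmin_ge_iff by blast

lemma hmax_lt_iff: "hmax h < b \<longleftrightarrow> (\<forall>z\<in>entries h. z < b)"
  unfolding hmax_def by (subst Max_less_iff) (auto simp: hook_entries_def)

lemma hmin_gt_iff: "b < hmin h \<longleftrightarrow> (\<forall>z\<in>entries h. b < z)"
  unfolding hmin_def by (subst Min_gr_iff) (auto simp: hook_entries_def)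

lemma valid_hookD:
  assumes "valid_hook h"
  shows "0 < hentry h" "\<And>y. y \<in> set (hleg h) \<Longrightarrow> hentry h < y"
    "\<And>y. y \<in> set (harm h) \<Longrightarrow> hentry h \<le> y"
    "sorted_wrt (<) (hleg h)" "sorted (harm h)"
  using assms by (auto simp: valid_hook_def)

lemma valid_hookI:
  assumes "0 < hentry h" "\<And>y. y \<in> set (hleg h) \<Longrightarrow> hentry h < y"
    "\<And>y. y \<in> set (harm h) \<Longrightarrow> hentry h \<le> y"
    "sorted_wrt (<) (hleg h)" "sorted (harm h)"
  shows "valid_hook h"
  using assms by (auto simp: valid_hook_def)

lemma hmin_eq_hentry: assumes "valid_hook h" shows "hmin h = hentry h"
proof (rule antisym)
  show "hmin h \<le> hentry h" by (rule hmin_le[OF hentry_in_entries])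
  show "hentry h \<le> hmin h" unfolding hmin_ge_iff entries_eq
    using valid_hookD(2,3)[OF assms] by (auto intro: less_imp_le)
qed

lemma hook_sel[simp]: "hentry (x, L, A) = x" "hleg (x, L, A) = L" "harm (x, L, A) = A"
  by (simp_all add: hentry_def hleg_def harm_def)

lemma cells_iff: "(r,c) \<in> cells T \<longleftrightarrow> 1 \<le> r \<and> r \<le> length T \<and> 1 \<le> c \<and> c \<le> length (T!(r-1))"
  by (auto simp: cells_def part_cells_def shape_def)

lemma length_shape: "length (shape T) = length T" by (simp add: shape_def)
lemma nth_shape: "i < length T \<Longrightarrow> shape T ! i = length (T ! i)" by (simp add: shape_def)

lemma partition_antimono:
  assumes "is_partition p" "i < j" "j < length p"
  shows "p ! j \<le> p ! i"
  using assms unfolding is_partition_def by (simp add: sorted_wrt_iff_nth_less)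

lemma partition_pos:
  assumes "is_partition p" "i < length p" shows "0 < p ! i"
  using assms unfolding is_partition_def by (metis gr0I nth_mem)

lemma HVT_partition: "is_HVT T \<Longrightarrow> is_partition (shape T)" by (simp add: is_HVT_def)

lemma HVT_valid_hook: "is_HVT T \<Longrightarrow> (r,c) \<in> cells T \<Longrightarrow> valid_hook (cell T r c)"
  by (auto simp: is_HVT_def)

lemma HVT_row: "is_HVT T \<Longrightarrow> (r,c) \<in> cells T \<Longrightarrow> (r,c') \<in> cells T \<Longrightarrow> c < c'
   \<Longrightarrow> hmax (cell T r c) \<le> hmin (cell T r c')"
  by (auto simp: is_HVT_def)

lemma HVT_col: "is_HVT T \<Longrightarrow> (r,c) \<in> cells T \<Longrightarrow> (r',c) \<in> cells T \<Longrightarrow> r < r'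
   \<Longrightarrow> hmax (cell T r c) < hmin (cell T r' c)"
  by (auto simp: is_HVT_def)

lemma HVT_row_entries: "is_HVT T \<Longrightarrow> (r,c) \<in> cells T \<Longrightarrow> (r,c') \<in> cells T \<Longrightarrow> c < c'
   \<Longrightarrow> z \<in> entries (cell T r c) \<Longrightarrow> z' \<in> entries (cell T r c') \<Longrightarrow> z \<le> z'"
  by (meson HVT_row hmin_le le_hmax order_trans)

lemma HVT_col_entries: "is_HVT T \<Longrightarrow> (r,c) \<in> cells T \<Longrightarrow> (r',c) \<in> cells T \<Longrightarrow> r < r'
   \<Longrightarrow> z \<in> entries (cell T r c) \<Longrightarrow> z' \<in> entries (cell T r' c) \<Longrightarrow> z < z'"
  by (meson HVT_col hmin_le le_hmax le_less_trans less_le_trans)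

lemma cells_down_closed:
  assumes "is_partition (shape T)" "(r',c) \<in> cells T" "1 \<le> r" "r \<le> r'"
  shows "(r,c) \<in> cells T"
proof -
  have "length (T!(r'-1)) \<le> length (T!(r-1))"
  proof (cases "r = r'")
    case False
    then show ?thesis using partition_antimono[OF assms(1), of "r-1" "r'-1"] assms
      by (auto simp: cells_iff length_shape nth_shape)
  qed simp
  then show ?thesis using assms by (auto simp: cells_iff)
qed

lemma cells_left_closed:
  assumes "(r,c') \<in> cells T" "1 \<le> c" "c \<le> c'"
  shows "(r,c) \<in> cells T"
  using assms by (auto simp: cells_iff)

definition update_cell :: "tab \<Rightarrow> nat \<Rightarrow> nat \<Rightarrow> hook \<Rightarrow> tab" where
  "update_cell T r c g = T[r-1 := (T!(r-1))[c-1 := g]]"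

lemma length_update_cell[simp]: "length (update_cell T r c g) = length T" by (simp add: update_cell_def)

lemma nth_update_cell: "i < length T \<Longrightarrow> update_cell T r c g ! i = (if i = r - 1 then (T!i)[c-1 := g] else T ! i)"
  by (simp add: update_cell_def)

lemma shape_update_cell[simp]: "shape (update_cell T r c g) = shape T"
  unfolding shape_def update_cell_def
  by (rule nth_equalityI) (auto simp: nth_list_update intro: list_update_beyond split: if_splits,
     metis length_list_update list_update_beyond not_le nth_list_update_eq nth_list_update_neq)

lemma cells_update_cell[simp]: "cells (update_cell T r c g) = cells T" by (simp add: cells_def)

lemma cell_update_cell:
  assumes "(r,c) \<in> cells T" "(r',c') \<in> cells T"
  shows "cell (update_cell T r c g) r' c' = (if r' = r \<and> c' = c then g else cell T r' c')"
  using assms by (auto simp: cell_def update_cell_def cells_iff nth_list_update)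

lemma HVT_update_cell:
  assumes H: "is_HVT T" and rc: "(r,c) \<in> cells T" and v: "valid_hook g"
    and L: "\<And>c'. (r,c') \<in> cells T \<Longrightarrow> c' < c \<Longrightarrow> hmax (cell T r c') \<le> hmin g"
    and R: "\<And>c'. (r,c') \<in> cells T \<Longrightarrow> c < c' \<Longrightarrow> hmax g \<le> hmin (cell T r c')"
    and D: "\<And>r'. (r',c) \<in> cells T \<Longrightarrow> r' < r \<Longrightarrow> hmax (cell T r' c) < hmin g"
    and U: "\<And>r'. (r',c) \<in> cells T \<Longrightarrow> r < r' \<Longrightarrow> hmax g < hmin (cell T r' c)"
  shows "is_HVT (update_cell T r c g)"
  unfolding is_HVT_def
proof (intro conjI allI impI ballI)
  show "is_partition (shape (update_cell T r c g))" using HVT_partition[OF H] by simp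
next
  fix x assume "x \<in> cells (update_cell T r c g)"
  then obtain a b where x: "x = (a,b)" "(a,b) \<in> cells T" by (cases x) auto
  show "case x of (r', c') \<Rightarrow> valid_hook (cell (update_cell T r c g) r' c')"
    using HVT_valid_hook[OF H x(2)] v rc x by (simp add: cell_update_cell)
next
  fix a b b' assume 1: "(a,b) \<in> cells (update_cell T r c g)" and 2: "(a,b') \<in> cells (update_cell T r c g)"
    and "b < b'"
  then have 1: "(a,b) \<in> cells T" and 2: "(a,b') \<in> cells T" by auto
  show "hmax (cell (update_cell T r c g) a b) \<le> hmin (cell (update_cell T r c g) a b')"
    unfolding cell_update_cell[OF rc 1] cell_update_cell[OF rc 2]
    using HVT_row[OF H 1 2 \<open>b < b'\<close>] L[of b] R[of b'] 1 2 \<open>b < b'\<close> by auto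
next
  fix a a' b assume 1: "(a,b) \<in> cells (update_cell T r c g)" and 2: "(a',b) \<in> cells (update_cell T r c g)"
    and "a < a'"
  then have 1: "(a,b) \<in> cells T" and 2: "(a',b) \<in> cells T" by auto
  show "hmax (cell (update_cell T r c g) a b) < hmin (cell (update_cell T r c g) a' b)"
    unfolding cell_update_cell[OF rc 1] cell_update_cell[OF rc 2]
    using HVT_col[OF H 1 2 \<open>a < a'\<close>] D[of a] U[of a'] 1 2 \<open>a < a'\<close> by auto
qed

definition append_cell :: "tab \<Rightarrow> nat \<Rightarrow> hook \<Rightarrow> tab" where
  "append_cell T r g = set_row T r (get_row T r @ [g])"

lemma get_row_out: "\<not> (1 \<le> r \<and> r \<le> length T) \<Longrightarrow> get_row T r = []"
  unfolding get_row_def by auto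

lemma length_append_cell: "1 \<le> r \<Longrightarrow> r \<le> Suc (length T) \<Longrightarrow>
   length (append_cell T r g) = (if r \<le> length T then length T else Suc (length T))"
  by (simp add: append_cell_def set_row_def)

lemma nth_append_cell: "1 \<le> r \<Longrightarrow> r \<le> Suc (length T) \<Longrightarrow> i < length (append_cell T r g) \<Longrightarrow>
   append_cell T r g ! i = (if i = r - 1 then get_row T r @ [g] else T ! i)"
  by (auto simp: append_cell_def set_row_def nth_append get_row_def nth_list_update)

lemma cells_append_cell:
  assumes "1 \<le> r" "r \<le> Suc (length T)"
  shows "cells (append_cell T r g) = insert (r, Suc (length (get_row T r))) (cells T)"
proof -
  have "(a,b) \<in> cells (append_cell T r g) \<longleftrightarrow> (a,b) \<in> insert (r, Suc (length (get_row T r))) (cells T)" for a b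
  proof (cases "a = r")
    case True
    then show ?thesis using assms
      by (auto simp: cells_iff length_append_cell nth_append_cell get_row_def)
  next
    case False
    then show ?thesis using assms
      by (auto simp: cells_iff length_append_cell nth_append_cell split: if_splits)
  qed
  then show ?thesis by auto
qed

lemma cell_append_cell:
  assumes "1 \<le> r" "r \<le> Suc (length T)" "(a,b) \<in> cells (append_cell T r g)"
  shows "cell (append_cell T r g) a b = (if a = r \<and> b = Suc (length (get_row T r)) then g else cell T a b)"
proof -
  have a: "a - 1 < length (append_cell T r g)" "1 \<le> a" "1 \<le> b" using assms(3) by (auto simp: cells_iff)
  show ?thesis
  proof (cases "a = r")
    case True
    then show ?thesis using assms a
      by (auto simp: cell_def nth_append_cell nth_append get_row_def cells_iff cells_append_cell)
  next
    case False
    then have "a - 1 \<noteq> r - 1" using a assms by auto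
    then show ?thesis using assms a False by (auto simp: cell_def nth_append_cell)
  qed
qed

lemma shape_append_cell:
  assumes "1 \<le> r" "r \<le> Suc (length T)"
  shows "shape (append_cell T r g) = (if r \<le> length T then (shape T)[r-1 := Suc (shape T ! (r-1))]
                             else shape T @ [1])"
  using assms
  by (auto simp: shape_def append_cell_def set_row_def get_row_def map_update)

lemma partition_increment:
  assumes P: "is_partition p" and i: "0 < i" "i < length p" and lt: "p ! i < p ! (i - 1)"
  shows "is_partition (p[i := Suc (p ! i)])"
proof -
  have "p[i := Suc (p ! i)] ! b \<le> p[i := Suc (p ! i)] ! a" if ab: "a < b" "b < length p" for a b
  proof (cases "b = i")
    case True
    then have "p ! (i - 1) \<le> p ! a"
      using partition_antimono[OF P, of a "i - 1"] ab i by (cases "a = i - 1") auto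
    then show ?thesis using True ab lt by (simp add: nth_list_update)
  next
    case False
    then show ?thesis using partition_antimono[OF P ab] ab i by (auto simp: nth_list_update)
  qed
  moreover have "0 \<notin> set (p[i := Suc (p ! i)])"
    using P set_update_subset_insert[of p i "Suc (p ! i)"] by (auto simp: is_partition_def)
  ultimately show ?thesis by (simp add: is_partition_def sorted_wrt_iff_nth_less)
qed

lemma partition_snoc_1: "is_partition p \<Longrightarrow> is_partition (p @ [1])"
  by (auto simp: is_partition_def sorted_wrt_append Suc_le_eq) (metis gr0I)

lemma partition_append_cell:
  assumes P: "is_partition (shape T)" and r: "2 \<le> r" "r \<le> Suc (length T)"
    and lt: "length (get_row T r) < length (T ! (r-2))"
  shows "is_partition (shape (append_cell T r g))"
proof (cases "r \<le> length T")
  case True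
  have "shape T ! (r - 1) < shape T ! (r - 1 - 1)"
    using lt True r by (simp add: nth_shape get_row_def numeral_2_eq_2)
  then show ?thesis
    using partition_increment[OF P, of "r - 1"] True r by (simp add: shape_append_cell length_shape)
next
  case False
  then show ?thesis using partition_snoc_1[OF P] r by (simp add: shape_append_cell)
qed

lemma append_cell_position_free:
  assumes "is_partition (shape T)" "1 \<le> r" "r \<le> a"
  shows "(a, Suc (length (get_row T r))) \<notin> cells T"
proof
  assume "(a, Suc (length (get_row T r))) \<in> cells T"
  then have "(r, Suc (length (get_row T r))) \<in> cells T"
    by (rule cells_down_closed[OF assms(1) _ assms(2,3)])
  then show False by (auto simp: cells_iff get_row_def)
qed

lemma HVT_append_cell:
  assumes H: "is_HVT T" and r: "2 \<le> r" "r \<le> Suc (length T)"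
    and lt: "length (get_row T r) < length (T ! (r-2))"
    and v: "valid_hook g"
    and L: "\<And>c'. (r,c') \<in> cells T \<Longrightarrow> hmax (cell T r c') \<le> hmin g"
    and D: "\<And>r'. (r', Suc (length (get_row T r))) \<in> cells T \<Longrightarrow> r' < r
              \<Longrightarrow> hmax (cell T r' (Suc (length (get_row T r)))) < hmin g"
  shows "is_HVT (append_cell T r g)"
proof -
  let ?n = "Suc (length (get_row T r))"
  have r1: "1 \<le> r" using r by simp
  have P: "is_partition (shape T)" using HVT_partition[OF H] .
  have C: "cells (append_cell T r g) = insert (r, ?n) (cells T)" using cells_append_cell[OF r1 r(2)] .
  have cellA: "\<And>a b. (a,b) \<in> cells (append_cell T r g) \<Longrightarrow>
      cell (append_cell T r g) a b = (if a = r \<and> b = ?n then g else cell T a b)"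
    using cell_append_cell[OF r1 r(2)] by blast
  have free: "(a, ?n) \<notin> cells T" if "r \<le> a" for a using append_cell_position_free[OF P r1 that] .
  show ?thesis unfolding is_HVT_def
  proof (intro conjI allI impI ballI)
    show "is_partition (shape (append_cell T r g))" using partition_append_cell[OF P r lt] .
  next
    fix x assume x: "x \<in> cells (append_cell T r g)"
    then obtain a b where ab: "x = (a,b)" by (cases x)
    show "case x of (r', c') \<Rightarrow> valid_hook (cell (append_cell T r g) r' c')"
      using x ab cellA[of a b] C HVT_valid_hook[OF H, of a b] v by auto
  next
    fix a b b' assume 1: "(a,b) \<in> cells (append_cell T r g)" and 2: "(a,b') \<in> cells (append_cell T r g)"
      and bb: "b < b'"
    have old: "(a, b) \<in> cells T" using 1 2 bb C by (auto simp: cells_iff get_row_def)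
    have "a = r \<and> b' = ?n \<or> (a, b') \<in> cells T" using 2 C by auto
    then show "hmax (cell (append_cell T r g) a b) \<le> hmin (cell (append_cell T r g) a b')"
      using cellA[OF 1] cellA[OF 2] old L[of b] HVT_row[OF H old _ bb] free[of r] by auto
  next
    fix a a' b assume 1: "(a,b) \<in> cells (append_cell T r g)" and 2: "(a',b) \<in> cells (append_cell T r g)"
      and aa: "a < a'"
    have old: "(a, b) \<in> cells T" using 1 2 aa C free by auto
    have "a' = r \<and> b = ?n \<or> (a', b) \<in> cells T" using 2 C by auto
    then show "hmax (cell (append_cell T r g) a b) < hmin (cell (append_cell T r g) a' b)"
      using cellA[OF 1] cellA[OF 2] old D[of a] aa HVT_col[OF H old _ aa] free[of r] by auto
  qed
qed

definition leg_count :: "hook list \<Rightarrow> nat" where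
  "leg_count row = sum_list (map (\<lambda>h. length (hleg h)) row)"
definition row_legs_count :: "tab \<Rightarrow> nat \<Rightarrow> nat" where "row_legs_count T t = leg_count (get_row T t)"
definition row_entries :: "tab \<Rightarrow> nat \<Rightarrow> nat set" where
  "row_entries T t = (\<Union>h\<in>set (get_row T t). entries h)"
definition row_legs :: "tab \<Rightarrow> nat \<Rightarrow> nat set" where
  "row_legs T t = (\<Union>h\<in>set (get_row T t). set (hleg h))"

lemma leg_excess_eq_leg_count: "leg_excess T = sum_list (map leg_count T)"
  unfolding leg_excess_def leg_count_def[abs_def] ..

lemma leg_count_0_iff: "leg_count row = 0 \<longleftrightarrow> (\<forall>h\<in>set row. hleg h = [])"
  by (auto simp: leg_count_def sum_list_eq_0_iff)

lemma row_legs_count_pos_iff: "0 < row_legs_count T t \<longleftrightarrow> (\<exists>h\<in>set (get_row T t). hleg h \<noteq> [])"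
  by (metis row_legs_count_def gr0I leg_count_0_iff neq0_conv)

lemma row_legs_count_out: "\<not> (1 \<le> t \<and> t \<le> length T) \<Longrightarrow> row_legs_count T t = 0"
  by (simp add: row_legs_count_def get_row_out leg_count_def)

lemma ex_row_with_legs:
  assumes "0 < leg_excess T"
  shows "\<exists>t. 1 \<le> t \<and> t \<le> length T \<and> 0 < row_legs_count T t"
proof -
  have "\<exists>row\<in>set T. leg_count row \<noteq> 0"
  proof (rule ccontr)
    assume "\<not> ?thesis"
    then have "leg_excess T = 0" unfolding leg_excess_eq_leg_count by (simp add: sum_list_eq_0_iff)
    with assms show False by simp
  qed
  then obtain i where "i < length T" "leg_count (T ! i) \<noteq> 0" by (auto simp: in_set_conv_nth)
  then show ?thesis by (intro exI[of _ "Suc i"]) (auto simp: row_legs_count_def get_row_def)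
qed

lemma top_set_eq: "{r. 1 \<le> r \<and> r \<le> length T \<and> (\<exists>h\<in>set (T ! (r - 1)). hleg h \<noteq> [])}
   = {t. 1 \<le> t \<and> t \<le> length T \<and> 0 < row_legs_count T t}"
  by (rule Collect_cong) (metis row_legs_count_pos_iff get_row_def)

lemma top_leg_row_props:
  assumes "0 < leg_excess T"
  shows "1 \<le> top_leg_row T" "top_leg_row T \<le> length T" "0 < row_legs_count T (top_leg_row T)"
    "\<And>t. top_leg_row T < t \<Longrightarrow> row_legs_count T t = 0"
proof -
  let ?S = "{t. 1 \<le> t \<and> t \<le> length T \<and> 0 < row_legs_count T t}"
  have fin: "finite ?S" by (rule finite_subset[of _ "{..length T}"]) auto
  have ne: "?S \<noteq> {}" using ex_row_with_legs[OF assms] by auto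
  have b: "top_leg_row T = Max ?S" unfolding top_leg_row_def top_set_eq ..
  have "top_leg_row T \<in> ?S" unfolding b using Max_in[OF fin ne] .
  then show "1 \<le> top_leg_row T" "top_leg_row T \<le> length T" "0 < row_legs_count T (top_leg_row T)" by auto
  fix t assume t: "top_leg_row T < t"
  show "row_legs_count T t = 0"
  proof (rule ccontr)
    assume "row_legs_count T t \<noteq> 0"
    then have "t \<le> length T" using row_legs_count_out[of t T] by fastforce
    with \<open>row_legs_count T t \<noteq> 0\<close> t \<open>1 \<le> top_leg_row T\<close> have "t \<in> ?S" by auto
    then have "t \<le> top_leg_row T" unfolding b using Max_ge[OF fin] by blast
    with t show False by simp
  qed
qed

lemma top_leg_row_eqI:
  assumes "1 \<le> s" "s \<le> length T" "0 < row_legs_count T s" "\<And>t. s < t \<Longrightarrow> row_legs_count T t = 0"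
  shows "top_leg_row T = s"
proof -
  let ?S = "{t. 1 \<le> t \<and> t \<le> length T \<and> 0 < row_legs_count T t}"
  have fin: "finite ?S" by (rule finite_subset[of _ "{..length T}"]) auto
  have b: "top_leg_row T = Max ?S" unfolding top_leg_row_def top_set_eq ..
  show ?thesis unfolding b
  proof (rule Max_eqI[OF fin])
    fix y assume "y \<in> ?S"
    then have "0 < row_legs_count T y" by simp
    then show "y \<le> s" using assms(4)[of y] by (metis not_le less_irrefl)
  next
    show "s \<in> ?S" using assms by simp
  qed
qed

section \<open>One bumping step\<close>

text \<open>The quantities of one bumping step, named after the variables of \<^const>\<open>bump\<close>:
  \<open>bump_hr\<close> is the new content of the cell \<open>(r, c)\<close> and \<open>bump_hn\<close> that of the cell
  \<open>(r + 1, ct)\<close>.\<close>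

definition bump_R :: "tab \<Rightarrow> hook list" where "bump_R T = get_row T (top_leg_row T)"
definition bump_m :: "tab \<Rightarrow> nat" where
  "bump_m T = Max {Max (set (hleg h)) | h. h \<in> set (bump_R T) \<and> hleg h \<noteq> []}"
definition bump_c :: "tab \<Rightarrow> nat" where
  "bump_c T = Max {j. 1 \<le> j \<and> j \<le> length (bump_R T) \<and> hleg (bump_R T ! (j - 1)) \<noteq> []
                     \<and> Max (set (hleg (bump_R T ! (j - 1)))) = bump_m T}"
definition bump_h :: "tab \<Rightarrow> hook" where "bump_h T = bump_R T ! (bump_c T - 1)"
definition bump_l :: "tab \<Rightarrow> nat" where "bump_l T = Max (set (hleg (bump_h T)))"
definition bump_a :: "tab \<Rightarrow> nat" where "bump_a T = last (harm (bump_h T))"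
definition bump_R1 :: "tab \<Rightarrow> hook list" where "bump_R1 T = get_row T (top_leg_row T + 1)"
definition bump_J :: "tab \<Rightarrow> nat set" where
  "bump_J T = {j. 1 \<le> j \<and> j \<le> length (bump_R1 T) \<and> (\<exists>z\<in>set (hook_entries (bump_R1 T ! (j - 1))). bump_l T < z)}"
definition bump_ct :: "tab \<Rightarrow> nat" where
  "bump_ct T = (if bump_J T = {} then length (bump_R1 T) + 1 else Min (bump_J T))"
definition bump_k :: "tab \<Rightarrow> nat" where
  "bump_k T = (if bump_J T = {} then 0
     else Min {z \<in> set (hook_entries (bump_R1 T ! (bump_ct T - 1))). bump_l T < z})"
definition bump_M :: "tab \<Rightarrow> nat list" where
  "bump_M T = filter (\<lambda>z. bump_l T \<le> z \<and> z \<le> bump_a T) (harm (bump_h T))"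
definition bump_hr :: "tab \<Rightarrow> hook" where
  "bump_hr T = (if bump_ct T \<noteq> bump_c T
              then (hentry (bump_h T), remove1 (bump_l T) (hleg (bump_h T)), harm (bump_h T))
            else (hentry (bump_h T), remove1 (bump_l T) (hleg (bump_h T)),
                  filter (\<lambda>z. \<not> (bump_l T \<le> z \<and> z \<le> bump_a T)) (harm (bump_h T))))"
definition bump_hn :: "tab \<Rightarrow> hook" where
  "bump_hn T = (if bump_ct T \<noteq> bump_c T then
              (if bump_J T = {} then (bump_l T, [], [])
               else add_to_leg (replace_entry (bump_R1 T ! (bump_ct T - 1)) (bump_k T) (bump_l T)) (bump_k T))
            else (if bump_J T = {} then (bump_l T, [], sort (bump_M T))
                  else (bump_l T, insort (bump_k T) (hleg (bump_R1 T ! (bump_ct T - 1))),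
                        sort (harm (bump_R1 T ! (bump_ct T - 1)) @ bump_M T))))"

lemma bump_unfold:
  "bump T = set_row (set_row T (top_leg_row T) ((bump_R T)[bump_c T - 1 := bump_hr T])) (top_leg_row T + 1)
              (if bump_J T = {} then bump_R1 T @ [bump_hn T] else (bump_R1 T)[bump_ct T - 1 := bump_hn T])"
  unfolding bump_def Let_def bump_R_def[symmetric] bump_m_def[symmetric]
    bump_c_def[symmetric] bump_h_def[symmetric] bump_l_def[symmetric] bump_a_def[symmetric]
    bump_R1_def[symmetric]
    bump_J_def[symmetric] bump_ct_def[symmetric] bump_k_def[symmetric] bump_M_def[symmetric]
  by (simp add: bump_hr_def bump_hn_def)

lemma cells_iff_get_row: "(t,j) \<in> cells T \<longleftrightarrow> 1 \<le> j \<and> j \<le> length (get_row T t) \<and> 1 \<le> t"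
  by (auto simp: cells_iff get_row_def)

lemma cell_eq_get_row: "(t,j) \<in> cells T \<Longrightarrow> cell T t j = get_row T t ! (j - 1)"
  by (auto simp: cells_iff get_row_def cell_def)

lemma in_set_get_row: "x \<in> set (get_row T t) \<longleftrightarrow> (\<exists>j. (t,j) \<in> cells T \<and> cell T t j = x)"
proof
  assume "x \<in> set (get_row T t)"
  then obtain i where i: "i < length (get_row T t)" "get_row T t ! i = x" by (auto simp: in_set_conv_nth)
  then have "1 \<le> t" by (auto simp: get_row_def split: if_splits)
  then have "(t, Suc i) \<in> cells T" using i by (simp add: cells_iff_get_row)
  then show "\<exists>j. (t,j) \<in> cells T \<and> cell T t j = x" using i cell_eq_get_row by fastforce
next
  assume "\<exists>j. (t,j) \<in> cells T \<and> cell T t j = x"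
  then obtain j where j: "(t,j) \<in> cells T" "cell T t j = x" by blast
  have "j - 1 < length (get_row T t)" using j(1) cells_iff_get_row[of t j T] by auto
  then show "x \<in> set (get_row T t)" using cell_eq_get_row[OF j(1)] j(2) nth_mem by metis
qed

lemma row_entries_iff: "z \<in> row_entries T t \<longleftrightarrow> (\<exists>j. (t,j) \<in> cells T \<and> z \<in> entries (cell T t j))"
  unfolding row_entries_def using in_set_get_row by fastforce

lemma row_legs_iff: "z \<in> row_legs T t \<longleftrightarrow> (\<exists>j. (t,j) \<in> cells T \<and> z \<in> set (hleg (cell T t j)))"
  unfolding row_legs_def using in_set_get_row by fastforce

lemma row_legs_count_0_legs: "row_legs_count T t = 0 \<Longrightarrow> (t,j) \<in> cells T \<Longrightarrow> hleg (cell T t j) = []"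
  unfolding row_legs_count_def leg_count_0_iff using in_set_get_row by blast

lemma sorted_le_last: "sorted xs \<Longrightarrow> z \<in> set xs \<Longrightarrow> z \<le> last xs"
proof (induction xs)
  case (Cons x xs)
  show ?case
  proof (cases "xs = []")
    case True then show ?thesis using Cons by simp
  next
    case False
    then have "last xs \<in> set xs" by simp
    then show ?thesis using Cons False by auto
  qed
qed simp

lemma strict_sorted_remove1: "sorted_wrt (<) (xs :: 'a::linorder list) \<Longrightarrow> sorted_wrt (<) (remove1 a xs)"
  by (simp add: strict_sorted_iff sorted_remove1 distinct_remove1)

lemma strict_sorted_remove1_lt:
  assumes "sorted_wrt (<) xs" "y \<in> set (remove1 a xs)" "a = Max (set xs)"
  shows "y < a"
proof -
  have d: "distinct xs" using assms(1) by (simp add: strict_sorted_iff)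
  have "y \<in> set xs" using assms(2) set_remove1_subset by fast
  then have "y \<le> a" using assms(3) by simp
  moreover have "y \<noteq> a" using assms(2) d by simp
  ultimately show ?thesis by simp
qed

lemma replace_entry_add_to_leg:
  assumes g: "valid_hook g" "hleg g = []" and k: "k \<in> entries g" "l < k" and l: "0 < l"
    and k_min: "\<And>z. z \<in> entries g \<Longrightarrow> l < z \<Longrightarrow> k \<le> z"
  shows "valid_hook (add_to_leg (replace_entry g k l) k)"
    "entries (add_to_leg (replace_entry g k l) k) = insert l (entries g)"
    "hleg (add_to_leg (replace_entry g k l) k) = [k]"
proof -
  let ?h = "add_to_leg (replace_entry g k l) k"
  have "valid_hook ?h \<and> entries ?h = insert l (entries g) \<and> hleg ?h = [k]"
  proof (cases "hentry g = k")
    case True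
    then have h: "?h = (l, [k], harm g)" using g(2)
      by (simp add: replace_entry_def add_to_leg_def hentry_def hleg_def harm_def)
    have "\<forall>y\<in>set (harm g). l \<le> y" using valid_hookD(3)[OF g(1)] True k by force
    then show ?thesis using h True l k valid_hookD(5)[OF g(1)] g(2)
      by (auto simp: valid_hook_def entries_eq)
  next
    case False
    have "hentry g \<le> k" using hmin_le[OF k(1)] hmin_eq_hentry[OF g(1)] by simp
    then have gl: "hentry g \<le> l" using k_min[OF hentry_in_entries] False by force
    have k_arm: "k \<in> set (harm g)" using k(1) False g(2) by (simp add: entries_eq)
    have h: "?h = (hentry g, [k], insort l (remove1 k (harm g)))" using g(2) False
      by (simp add: replace_entry_def add_to_leg_def hentry_def hleg_def harm_def)
    have "valid_hook ?h"
      using h gl k(2) valid_hookD(1,3,5)[OF g(1)]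
      by (auto simp: valid_hook_def set_insort_key sorted_insort sorted_remove1
          dest: subsetD[OF set_remove1_subset])
    moreover have "set (harm g) = insert k (set (remove1 k (harm g)))"
      using k_arm set_remove1_subset[of k "harm g"] in_set_remove1[of _ k "harm g"] by blast
    ultimately show ?thesis using h k_arm g(2) by (auto simp: entries_eq set_insort_key)
  qed
  then show "valid_hook ?h" "entries ?h = insert l (entries g)" "hleg ?h = [k]" by auto
qed

lemma get_row_update_cell:
  assumes "1 \<le> a"
  shows "get_row (update_cell X a b y) t = (if t = a then (get_row X a)[b-1 := y] else get_row X t)"
proof (cases "t = a")
  case ta: True
  show ?thesis
  proof (cases "a \<le> length X")
    case True
    then have "a - 1 < length X" using assms by simp
    then show ?thesis using ta True assms by (simp add: get_row_def update_cell_def)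
  next
    case False
    then show ?thesis using ta by (simp add: get_row_def update_cell_def)
  qed
next
  case F: False
  show ?thesis
  proof (cases "1 \<le> t \<and> t \<le> length X")
    case True
    then have "t - 1 \<noteq> a - 1" "t - 1 < length X" using assms F by auto
    then show ?thesis using True F by (simp add: get_row_def nth_update_cell)
  next
    case False
    then have "get_row (update_cell X a b y) t = []" "get_row X t = []"
      unfolding get_row_def length_update_cell by (meson if_not_P)+
    then show ?thesis using F by simp
  qed
qed

lemma get_row_append_cell: assumes a: "1 \<le> a" "a \<le> Suc (length X)" shows
   "get_row (append_cell X a y) t = (if t = a then get_row X a @ [y] else get_row X t)"
proof -
  have L: "length (append_cell X a y) = (if a \<le> length X then length X else Suc (length X))"
    by (rule length_append_cell[OF a])
  show ?thesis
  proof (cases "t = a")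
    case True
    have "1 \<le> a \<and> a \<le> length (append_cell X a y)" using L a by auto
    then have e1: "get_row (append_cell X a y) a = append_cell X a y ! (a - 1)" by (simp add: get_row_def)
    have "a - 1 < length (append_cell X a y)" using L a by (cases "a \<le> length X") auto
    then have e2: "append_cell X a y ! (a - 1) = get_row X a @ [y]"
      using nth_append_cell[OF a, of "a - 1" y] by simp
    show ?thesis using True e1 e2 by simp
  next
    case F: False
    show ?thesis
    proof (cases "1 \<le> t \<and> t \<le> length (append_cell X a y)")
      case True
      then have t: "t - 1 \<noteq> a - 1" "t \<le> length X" "t - 1 < length (append_cell X a y)"
        using a F L by (auto split: if_splits)
      have "get_row (append_cell X a y) t = append_cell X a y ! (t - 1)" using True by (simp add: get_row_def)
      also have "\<dots> = X ! (t - 1)" using nth_append_cell[OF a t(3)] t(1) by simp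
      also have "\<dots> = get_row X t" using True t by (simp add: get_row_def)
      finally show ?thesis using F by simp
    next
      case False
      then have "get_row (append_cell X a y) t = []" unfolding get_row_def by (meson if_not_P)
      moreover have "get_row X t = []" using False L by (auto simp: get_row_def split: if_splits)
      ultimately show ?thesis using F by simp
    qed
  qed
qed

lemma leg_count_update:
  "i < length xs \<Longrightarrow> leg_count (xs[i:=y]) + length (hleg (xs!i)) = leg_count xs + length (hleg y)"
proof (induction xs arbitrary: i)
  case (Cons x xs)
  then show ?case by (cases i) (auto simp: leg_count_def)
qed simp

lemma leg_count_append: "leg_count (xs @ [y]) = leg_count xs + length (hleg y)"
  by (simp add: leg_count_def)

lemma leg_excess_eq_sum_rows:
  assumes "length T \<le> N"
  shows "leg_excess T = (\<Sum>t\<in>{1..N}. row_legs_count T t)"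
proof -
  have "leg_excess T = (\<Sum>i<length T. leg_count (T!i))"
    unfolding leg_excess_eq_leg_count by (simp add: sum_list_sum_nth atLeast0LessThan)
  also have "\<dots> = (\<Sum>i<length T. row_legs_count T (Suc i))"
    by (rule sum.cong) (auto simp: row_legs_count_def get_row_def)
  also have "\<dots> = (\<Sum>t\<in>{1..length T}. row_legs_count T t)"
    by (simp add: sum.atLeast1_atMost_eq)
  also have "\<dots> = (\<Sum>t\<in>{1..N}. row_legs_count T t)"
    by (rule sum.mono_neutral_left) (use assms row_legs_count_out in auto)
  finally show ?thesis .
qed

lemma sum_eq_except_two:
  fixes f g :: "nat \<Rightarrow> nat"
  assumes "finite A" "a \<in> A" "b \<in> A" "a \<noteq> b" "\<And>t. t \<in> A \<Longrightarrow> t \<noteq> a \<Longrightarrow> t \<noteq> b \<Longrightarrow> f t = g t"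
  shows "sum f A + g a + g b = sum g A + f a + f b"
proof -
  have "sum f A = f a + f b + sum f (A - {a} - {b})"
    using assms by (simp add: sum.remove[of A a] sum.remove[of "A - {a}" b])
  moreover have "sum g A = g a + g b + sum g (A - {a} - {b})"
    using assms by (simp add: sum.remove[of A a] sum.remove[of "A - {a}" b])
  moreover have "sum f (A - {a} - {b}) = sum g (A - {a} - {b})"
    by (rule sum.cong) (use assms in auto)
  ultimately show ?thesis by simp
qed

lemma in_set_list_update_cases: "x \<in> set xs \<Longrightarrow> i < length xs \<Longrightarrow> x \<in> set (xs[i := y]) \<or> x = xs ! i"
  by (metis in_set_conv_nth length_list_update nth_list_update_neq)

lemma row_entries_eq: "get_row X t = get_row Y t \<Longrightarrow> row_entries X t = row_entries Y t"
  by (simp add: row_entries_def)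

locale bump_step =
  fixes T :: tab
  assumes H: "is_HVT T" and E: "0 < leg_excess T"
begin

abbreviation "r \<equiv> top_leg_row T"
abbreviation "R \<equiv> bump_R T"
abbreviation "c \<equiv> bump_c T"
abbreviation "h \<equiv> bump_h T"
abbreviation "l \<equiv> bump_l T"
abbreviation "R1 \<equiv> bump_R1 T"
abbreviation "J \<equiv> bump_J T"
abbreviation "ct \<equiv> bump_ct T"
abbreviation "k \<equiv> bump_k T"

lemma r_ge1: "1 \<le> r" and r_le: "r \<le> length T" and row_legs_count_r: "0 < row_legs_count T r"
  and row_legs_count_above: "\<And>t. r < t \<Longrightarrow> row_legs_count T t = 0"
  using top_leg_row_props[OF E] by auto

lemma R_eq: "R = T ! (r - 1)" using r_ge1 r_le by (simp add: bump_R_def get_row_def)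

lemma r_cells: "(r,j) \<in> cells T \<longleftrightarrow> 1 \<le> j \<and> j \<le> length R"
  using r_ge1 by (simp add: cells_iff_get_row bump_R_def)

lemma r_cell: "1 \<le> j \<Longrightarrow> j \<le> length R \<Longrightarrow> cell T r j = R ! (j - 1)"
  using r_cells cell_eq_get_row by (simp add: bump_R_def)

lemma c_props:
  shows "1 \<le> c" "c \<le> length R" "hleg h \<noteq> []" "l = bump_m T"
    "\<And>j. 1 \<le> j \<Longrightarrow> j \<le> length R \<Longrightarrow> hleg (R ! (j-1)) \<noteq> [] \<Longrightarrow> Max (set (hleg (R ! (j-1)))) \<le> bump_m T"
    "\<And>j. 1 \<le> j \<Longrightarrow> j \<le> length R \<Longrightarrow> hleg (R ! (j-1)) \<noteq> [] \<Longrightarrow> Max (set (hleg (R ! (j-1)))) = bump_m T \<Longrightarrow> j \<le> c"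
proof -
  let ?C = "{Max (set (hleg h)) | h. h \<in> set R \<and> hleg h \<noteq> []}"
  have Ceq: "?C = (\<lambda>h. Max (set (hleg h))) ` {h \<in> set R. hleg h \<noteq> []}" by blast
  have finC: "finite ?C" unfolding Ceq by simp
  have "\<exists>x\<in>set R. hleg x \<noteq> []" using row_legs_count_r unfolding row_legs_count_pos_iff bump_R_def .
  then obtain x where x: "x \<in> set R" "hleg x \<noteq> []" by blast
  then have "Max (set (hleg x)) \<in> ?C" by blast
  then have neC: "?C \<noteq> {}" by blast
  have bmC: "bump_m T \<in> ?C" unfolding bump_m_def using Max_in[OF finC neC] .
  then obtain h0 where h0: "h0 \<in> set R" "hleg h0 \<noteq> []" "Max (set (hleg h0)) = bump_m T" by auto
  then obtain j0 where j0: "j0 < length R" "R ! j0 = h0" by (auto simp: in_set_conv_nth)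
  let ?Jc = "{j. 1 \<le> j \<and> j \<le> length R \<and> hleg (R ! (j - 1)) \<noteq> [] \<and> Max (set (hleg (R ! (j - 1)))) = bump_m T}"
  have finJ: "finite ?Jc" by (rule finite_subset[of _ "{..length R}"]) auto
  have "Suc j0 \<in> ?Jc" using j0 h0 by auto
  then have neJ: "?Jc \<noteq> {}" by blast
  have cJ: "c \<in> ?Jc" unfolding bump_c_def using Max_in[OF finJ neJ] .
  then show "1 \<le> c" "c \<le> length R" "hleg h \<noteq> []" "l = bump_m T"
    by (auto simp: bump_h_def bump_l_def)
  show "\<And>j. 1 \<le> j \<Longrightarrow> j \<le> length R \<Longrightarrow> hleg (R ! (j-1)) \<noteq> [] \<Longrightarrow> Max (set (hleg (R ! (j-1)))) \<le> bump_m T"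
  proof -
    fix j assume j: "1 \<le> j" "j \<le> length R" "hleg (R ! (j-1)) \<noteq> []"
    then have "R ! (j-1) \<in> set R" by simp
    then have "Max (set (hleg (R ! (j-1)))) \<in> ?C" using j by blast
    then show "Max (set (hleg (R ! (j-1)))) \<le> bump_m T" unfolding bump_m_def using Max_ge[OF finC] by blast
  qed
  show "\<And>j. 1 \<le> j \<Longrightarrow> j \<le> length R \<Longrightarrow> hleg (R ! (j-1)) \<noteq> [] \<Longrightarrow> Max (set (hleg (R ! (j-1)))) = bump_m T \<Longrightarrow> j \<le> c"
    unfolding bump_c_def using Max_ge[OF finJ] by blast
qed

lemma c_cell: "(r,c) \<in> cells T" "cell T r c = h"
  using c_props(1,2) r_cells r_cell by (auto simp: bump_h_def)

lemma h_valid: "valid_hook h" using HVT_valid_hook[OF H c_cell(1)] c_cell(2) by simp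

lemma l_leg: "l \<in> set (hleg h)"
  using c_props(3) by (simp add: bump_l_def)

lemma l_gt_entry: "hentry h < l" using valid_hookD(2)[OF h_valid l_leg] .

lemma l_in_entries: "l \<in> entries h" using l_leg by (simp add: entries_eq)

lemma l_pos: "0 < l" using l_gt_entry by simp

lemma legs_le:
  assumes "(r,j) \<in> cells T" "y \<in> set (hleg (cell T r j))"
  shows "y \<le> l"
proof -
  have j: "1 \<le> j" "j \<le> length R" using assms r_cells by auto
  have ne: "hleg (R ! (j-1)) \<noteq> []" using assms r_cell[OF j] by auto
  have "y \<le> Max (set (hleg (R ! (j-1))))" using assms r_cell[OF j] by simp
  also have "\<dots> \<le> bump_m T" using c_props(5)[OF j ne] .
  finally show ?thesis using c_props(4) by simp
qed

lemma legs_lt: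
  assumes "(r,j) \<in> cells T" "y \<in> set (hleg (cell T r j))" "j \<noteq> c \<or> y \<noteq> l"
  shows "y < l"
proof (rule ccontr)
  assume "\<not> y < l"
  then have yl: "y = l" using legs_le[OF assms(1,2)] by simp
  have j: "1 \<le> j" "j \<le> length R" using assms r_cells by auto
  have ne: "hleg (R ! (j-1)) \<noteq> []" using assms r_cell[OF j] by auto
  have "y \<le> Max (set (hleg (R ! (j-1))))" using assms r_cell[OF j] by simp
  moreover have "Max (set (hleg (R ! (j-1)))) \<le> bump_m T" using c_props(5)[OF j ne] .
  ultimately have "Max (set (hleg (R ! (j-1)))) = bump_m T" using yl c_props(4) by simp
  then have "j \<le> c" using c_props(6)[OF j ne] by simp
  moreover have "j \<noteq> c" using assms(3) yl by simp
  ultimately have "j < c" by simp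
  then have "y \<le> hmin h"
    using HVT_row[OF H assms(1) c_cell(1)] c_cell(2) le_hmax[of y "cell T r j"] assms(2)
    by (simp add: entries_eq)
  then have "y \<le> hentry h" using hmin_eq_hentry[OF h_valid] by simp
  with l_gt_entry yl show False by simp
qed

lemma R1_cells: "(Suc r, j) \<in> cells T \<longleftrightarrow> 1 \<le> j \<and> j \<le> length R1"
  by (simp add: cells_iff_get_row bump_R1_def)

lemma R1_cell: "1 \<le> j \<Longrightarrow> j \<le> length R1 \<Longrightarrow> cell T (Suc r) j = R1 ! (j - 1)"
  using R1_cells cell_eq_get_row by (simp add: bump_R1_def)

lemma R1_legs: "(Suc r, j) \<in> cells T \<Longrightarrow> hleg (cell T (Suc r) j) = []"
  using row_legs_count_0_legs row_legs_count_above[of "Suc r"] by simp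

lemma R1_ne_len: "R1 \<noteq> [] \<Longrightarrow> Suc r \<le> length T"
  by (auto simp: bump_R1_def get_row_def split: if_splits)

lemma J_sub: "J \<subseteq> {1..length R1}" by (auto simp: bump_J_def)
lemma J_fin: "finite J" using J_sub finite_subset by blast

lemma J_iff: "j \<in> J \<longleftrightarrow> (Suc r, j) \<in> cells T \<and> (\<exists>z\<in>entries (cell T (Suc r) j). l < z)"
  using R1_cells R1_cell by (auto simp: bump_J_def)

lemma c_in_J: assumes "c \<le> length R1" shows "c \<in> J"
proof -
  have cc: "(Suc r, c) \<in> cells T" using assms c_props(1) R1_cells by simp
  have "l < hentry (cell T (Suc r) c)"
    using HVT_col_entries[OF H c_cell(1) cc _ _ hentry_in_entries] l_in_entries c_cell(2) by simp
  then show ?thesis using J_iff cc hentry_in_entries by blast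
qed

lemma ct_le_c: "ct \<le> c"
proof (cases "J = {}")
  case True
  then have "\<not> c \<le> length R1" using c_in_J by blast
  then show ?thesis using True by (simp add: bump_ct_def)
next
  case False
  show ?thesis
  proof (cases "c \<le> length R1")
    case True
    then show ?thesis using c_in_J False J_fin by (simp add: bump_ct_def)
  next
    case F: False
    have "Min J \<in> J" using Min_in[OF J_fin False] .
    then have "Min J \<le> length R1" using J_sub by auto
    then show ?thesis using F False by (simp add: bump_ct_def)
  qed
qed

lemma new_len: "J = {} \<Longrightarrow> length R1 < c"
  using c_in_J by (metis empty_iff not_le)

lemma ct_new: "J = {} \<Longrightarrow> ct = Suc (length R1)" by (simp add: bump_ct_def)

lemma ct_ge1: "1 \<le> ct"
proof (cases "J = {}")
  case True then show ?thesis by (simp add: bump_ct_def)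
next
  case False
  then have "Min J \<in> J" using Min_in[OF J_fin] by blast
  then show ?thesis using J_sub False by (auto simp: bump_ct_def)
qed

lemma ct_J: "J \<noteq> {} \<Longrightarrow> ct \<in> J" using Min_in[OF J_fin] by (simp add: bump_ct_def)

lemma ct_cell: "J \<noteq> {} \<Longrightarrow> (Suc r, ct) \<in> cells T" using ct_J J_iff by blast

lemma left_of_ct_le_l: assumes "(Suc r, j) \<in> cells T" "j < ct" "z \<in> entries (cell T (Suc r) j)" shows "z \<le> l"
proof -
  have "j \<notin> J"
  proof
    assume "j \<in> J"
    then have "ct \<le> j" using Min_le[OF J_fin] by (auto simp: bump_ct_def)
    with assms(2) show False by simp
  qed
  then show ?thesis using assms J_iff by (meson not_le)
qed

lemma k_facts:
  assumes "J \<noteq> {}"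
  shows "k \<in> entries (cell T (Suc r) ct)" "l < k" "\<And>z. z \<in> entries (cell T (Suc r) ct) \<Longrightarrow> l < z \<Longrightarrow> k \<le> z"
proof -
  have cc: "(Suc r, ct) \<in> cells T" using ct_cell[OF assms] .
  have ctr: "1 \<le> ct" "ct \<le> length R1" using cc R1_cells by auto
  let ?Z = "{z \<in> set (hook_entries (R1 ! (ct - 1))). l < z}"
  have kdef: "k = Min ?Z" using assms by (simp add: bump_k_def)
  have Zeq: "?Z = {z \<in> entries (cell T (Suc r) ct). l < z}" using R1_cell[OF ctr] by simp
  have fin: "finite ?Z" by simp
  have ne: "?Z \<noteq> {}" using ct_J[OF assms] J_iff Zeq by auto
  have "k \<in> ?Z" unfolding kdef using Min_in[OF fin ne] .
  then show "k \<in> entries (cell T (Suc r) ct)" "l < k" using Zeq by auto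
  show "\<And>z. z \<in> entries (cell T (Suc r) ct) \<Longrightarrow> l < z \<Longrightarrow> k \<le> z"
    unfolding kdef using Min_le[OF fin] Zeq by blast
qed

lemma k_bound:
  assumes "z \<in> row_entries T (Suc r)" "l < z"
  shows "J \<noteq> {}" "k \<le> z"
proof -
  obtain j where j: "(Suc r, j) \<in> cells T" "z \<in> entries (cell T (Suc r) j)" using assms row_entries_iff by blast
  then have jJ: "j \<in> J" using J_iff assms by blast
  then show ne: "J \<noteq> {}" by blast
  have "ct \<le> j" using jJ Min_le[OF J_fin] by (auto simp: bump_ct_def)
  show "k \<le> z"
  proof (cases "ct = j")
    case True
    then show ?thesis using k_facts(3)[OF ne] j assms by simp
  next
    case False
    then have "ct < j" using \<open>ct \<le> j\<close> by simp
    then show ?thesis using HVT_row_entries[OF H ct_cell[OF ne] j(1) _ k_facts(1)[OF ne] j(2)] by simp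
  qed
qed

abbreviation "hr \<equiv> bump_hr T"
abbreviation "hn \<equiv> bump_hn T"
abbreviation "M \<equiv> bump_M T"
abbreviation "g \<equiv> cell T (Suc r) ct"
abbreviation "T1 \<equiv> update_cell T r c hr"

lemma arm_le_ba: "z \<in> set (harm h) \<Longrightarrow> z \<le> bump_a T"
  using sorted_le_last valid_hookD(5)[OF h_valid] by (simp add: bump_a_def)

lemma M_facts: "set M \<subseteq> entries h" "\<And>z. z \<in> set M \<Longrightarrow> l \<le> z"
  by (auto simp: bump_M_def entries_eq)

lemma hr_entry: "hentry hr = hentry h" by (simp add: bump_hr_def)
lemma hr_leg: "hleg hr = remove1 l (hleg h)" by (simp add: bump_hr_def)

lemma hr_sub: "entries hr \<subseteq> entries h"
  by (auto simp: bump_hr_def entries_eq dest: subsetD[OF set_remove1_subset])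

lemma hr_keep: "z \<in> entries h \<Longrightarrow> z < l \<Longrightarrow> z \<in> entries hr"
  by (auto simp: bump_hr_def entries_eq in_set_remove1)

lemma hr_valid: "valid_hook hr"
proof (rule valid_hookI)
  show "0 < hentry hr" using valid_hookD(1)[OF h_valid] hr_entry by simp
  show "hentry hr < y" if "y \<in> set (hleg hr)" for y
    using that valid_hookD(2)[OF h_valid] hr_entry hr_leg set_remove1_subset by (metis subsetD)
  show "hentry hr \<le> y" if "y \<in> set (harm hr)" for y
    using that valid_hookD(3)[OF h_valid] by (auto simp: bump_hr_def split: if_splits)
  show "sorted_wrt (<) (hleg hr)" using valid_hookD(4)[OF h_valid] hr_leg strict_sorted_remove1 by simp
  show "sorted (harm hr)" using valid_hookD(5)[OF h_valid] by (auto simp: bump_hr_def sorted_wrt_filter)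
qed

text \<open>In case (b) every arm entry \<open>\<ge> l\<close> moves up, since \<open>a\<close> is the largest arm entry.\<close>

lemma hr_lt: assumes "ct = c" "z \<in> entries hr" shows "z < l"
proof -
  have "z = hentry h \<or> z \<in> set (remove1 l (hleg h)) \<or> (z \<in> set (harm h) \<and> \<not> (l \<le> z \<and> z \<le> bump_a T))"
    using assms by (auto simp: bump_hr_def entries_eq)
  then show ?thesis
  proof (elim disjE)
    assume "z \<in> set (remove1 l (hleg h))"
    then show ?thesis using strict_sorted_remove1_lt[OF valid_hookD(4)[OF h_valid]] by (simp add: bump_l_def)
  qed (use l_gt_entry arm_le_ba in auto)
qed

lemma hmin_hr: "hmin hr = hmin h" using hmin_eq_hentry[OF hr_valid] hmin_eq_hentry[OF h_valid] hr_entry by simp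
lemma hmax_hr: "hmax hr \<le> hmax h" using hr_sub hmax_le_iff le_hmax by blast

lemma T1_HVT: "is_HVT T1"
proof (rule HVT_update_cell[OF H c_cell(1) hr_valid])
  show "hmax (cell T r c') \<le> hmin hr" if "(r, c') \<in> cells T" "c' < c" for c'
    using HVT_row[OF H that(1) c_cell(1) that(2)] hmin_hr c_cell(2) by simp
  show "hmax hr \<le> hmin (cell T r c')" if "(r, c') \<in> cells T" "c < c'" for c'
    using HVT_row[OF H c_cell(1) that(1) that(2)] hmax_hr c_cell(2) by simp
  show "hmax (cell T r' c) < hmin hr" if "(r', c) \<in> cells T" "r' < r" for r'
    using HVT_col[OF H that(1) c_cell(1) that(2)] hmin_hr c_cell(2) by simp
  show "hmax hr < hmin (cell T r' c)" if "(r', c) \<in> cells T" "r < r'" for r'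
    using HVT_col[OF H c_cell(1) that(1) that(2)] hmax_hr c_cell(2) by simp
qed

lemma T1_cell: "(a,b) \<in> cells T \<Longrightarrow> cell T1 a b = (if a = r \<and> b = c then hr else cell T a b)"
  using cell_update_cell[OF c_cell(1)] by simp

lemma get_row_T1: "get_row T1 (Suc r) = R1"
  using r_ge1 by (simp add: get_row_def update_cell_def bump_R1_def nth_list_update)

lemma bump_split: "bump T = (if J = {} then append_cell T1 (Suc r) hn else update_cell T1 (Suc r) ct hn)"
proof -
  have s1: "set_row T r ((bump_R T)[c - 1 := hr]) = T1"
    using r_le R_eq by (simp add: set_row_def update_cell_def)
  show ?thesis
  proof (cases "J = {}")
    case True
    then show ?thesis using s1 get_row_T1 by (simp add: bump_unfold append_cell_def)
  next
    case False
    then have "R1 \<noteq> []" using J_sub ct_J by fastforce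
    then have "Suc r \<le> length T" using R1_ne_len by simp
    moreover have "T1 ! r = R1" using get_row_T1 \<open>Suc r \<le> length T\<close> by (simp add: get_row_def)
    ultimately show ?thesis using s1 False
      by (simp add: bump_unfold set_row_def update_cell_def)
  qed
qed

lemma k_eq_hentry_g: assumes "J \<noteq> {}" "ct = c" shows "l < hentry g" "k = hentry g"
proof -
  have cc: "(Suc r, c) \<in> cells T" using ct_cell[OF assms(1)] assms(2) by simp
  have lc: "l \<in> entries (cell T r c)" using l_in_entries c_cell(2) by simp
  show lt: "l < hentry g"
    using HVT_col_entries[OF H c_cell(1) cc _ lc hentry_in_entries] assms(2) by simp
  have "k \<le> hentry g" using k_facts(3)[OF assms(1) hentry_in_entries lt] .
  moreover have "hentry g \<le> k"
    using hmin_le[OF k_facts(1)[OF assms(1)]] hmin_eq_hentry[OF HVT_valid_hook[OF H ct_cell[OF assms(1)]]] by simp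
  ultimately show "k = hentry g" by simp
qed

lemma g_leg: "J \<noteq> {} \<Longrightarrow> hleg g = []" using R1_legs ct_cell by blast
lemma g_valid: "J \<noteq> {} \<Longrightarrow> valid_hook g" using HVT_valid_hook[OF H ct_cell] by blast

lemma g_cell_eq: "J \<noteq> {} \<Longrightarrow> bump_R1 T ! (ct - 1) = g"
  using R1_cell ct_cell R1_cells by auto

lemma hn_case_a:
  assumes J: "J \<noteq> {}" and "ct \<noteq> c"
  shows "valid_hook hn" "entries hn = insert l (entries g)" "hleg hn = [k]"
proof -
  have hn: "hn = add_to_leg (replace_entry g k l) k" using assms g_cell_eq by (simp add: bump_hn_def)
  show "valid_hook hn" "entries hn = insert l (entries g)" "hleg hn = [k]"
    unfolding hn using replace_entry_add_to_leg[OF g_valid[OF J] g_leg[OF J] k_facts(1,2)[OF J] l_pos]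
      k_facts(3)[OF J] by blast+
qed

lemma hn_case_b:
  assumes "J \<noteq> {}" "ct = c"
  shows "valid_hook hn" "entries hn = insert l (entries g) \<union> set M" "hleg hn = [k]"
proof -
  have gl: "hleg g = []" using g_leg[OF assms(1)] .
  have gv: "valid_hook g" using g_valid[OF assms(1)] .
  have kk: "l < hentry g" "k = hentry g" using k_eq_hentry_g[OF assms] by auto
  have hn': "hn = (l, [k], sort (harm g @ M))" using assms g_cell_eq gl by (simp add: bump_hn_def)
  have la: "\<forall>y\<in>set (harm g). l \<le> y" using valid_hookD(3)[OF gv] kk by force
  show "valid_hook hn"
  proof (rule valid_hookI)
    show "0 < hentry hn" using hn' l_pos by simp
    show "hentry hn < y" if "y \<in> set (hleg hn)" for y using that hn' kk by simp
    show "hentry hn \<le> y" if "y \<in> set (harm hn)" for y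
      using that hn' la M_facts(2) by auto
    show "sorted_wrt (<) (hleg hn)" using hn' by simp
    show "sorted (harm hn)" using hn' by simp
  qed
  show "entries hn = insert l (entries g) \<union> set M" using hn' kk gl by (auto simp: entries_eq)
  show "hleg hn = [k]" using hn' by simp
qed

lemma hn_new_case_a: assumes "J = {}" "ct \<noteq> c" shows "hn = (l, [], [])"
  using assms by (simp add: bump_hn_def)

lemma hn_new_case_b: assumes "J = {}" "ct = c" shows "hn = (l, [], sort M)"
  using assms by (simp add: bump_hn_def)

lemma hn_new_cell_valid: assumes "J = {}" shows "valid_hook hn"
proof (cases "ct = c")
  case True
  then show ?thesis using hn_new_case_b[OF assms] l_pos M_facts(2) by (auto simp: valid_hook_def)
next
  case False
  then show ?thesis using hn_new_case_a[OF assms] l_pos by (auto simp: valid_hook_def)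
qed

lemma hn_valid: "valid_hook hn"
  using hn_new_cell_valid hn_case_a(1) hn_case_b(1) by blast

lemma hn_entries_cases: "z \<in> entries hn \<Longrightarrow> z = l \<or> (J \<noteq> {} \<and> z \<in> entries g) \<or> (ct = c \<and> z \<in> set M)"
proof -
  assume z: "z \<in> entries hn"
  show ?thesis
  proof (cases "J = {}")
    case True
    then show ?thesis using z hn_new_case_a hn_new_case_b by (cases "ct = c") (auto simp: entries_eq)
  next
    case False
    then show ?thesis using z hn_case_a(2) hn_case_b(2) by (cases "ct = c") auto
  qed
qed

lemma l_in_hn: "l \<in> entries hn"
proof (cases "J = {}")
  case True
  then show ?thesis using hn_new_case_a hn_new_case_b by (cases "ct = c") (auto simp: entries_eq)
next
  case False
  then show ?thesis using hn_case_a(2) hn_case_b(2) by (cases "ct = c") auto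
qed

lemma g_entries_in_hn: "J \<noteq> {} \<Longrightarrow> entries g \<subseteq> entries hn"
  using hn_case_a(2) hn_case_b(2) by (cases "ct = c") auto

lemma hn_leg: "hleg hn = (if J = {} then [] else [k])"
  using hn_case_a(3) hn_case_b(3) hn_new_case_a hn_new_case_b by (cases "J = {}"; cases "ct = c") auto

lemma ct_cells_r: "(r, ct) \<in> cells T"
  using ct_ge1 ct_le_c c_props(2) r_cells by simp

lemma hentry_r_ct: "hentry (cell T r ct) < l"
proof (cases "ct = c")
  case True then show ?thesis using c_cell l_gt_entry by simp
next
  case False
  then have "ct < c" using ct_le_c by simp
  then have "hentry (cell T r ct) \<le> hentry h"
    using HVT_row_entries[OF H ct_cells_r c_cell(1) _ hentry_in_entries] c_cell(2) hentry_in_entries by (metis)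
  then show ?thesis using l_gt_entry by simp
qed

lemma below_ct_lt_l:
  assumes "(r', ct) \<in> cells T" "r' \<le> r" "y \<in> entries (cell T1 r' ct)"
  shows "y < l"
proof (cases "r' = r")
  case True
  show ?thesis
  proof (cases "ct = c")
    case True
    then show ?thesis using assms \<open>r' = r\<close> hr_lt T1_cell by auto
  next
    case False
    then have "ct < c" using ct_le_c by simp
    have y: "y \<in> entries (cell T r ct)" using assms True False T1_cell by auto
    have "y \<le> hentry h"
      using HVT_row_entries[OF H ct_cells_r c_cell(1) \<open>ct < c\<close> y] c_cell(2) hentry_in_entries by simp
    then show ?thesis using l_gt_entry by simp
  qed
next
  case False
  then have lt: "r' < r" using assms by simp
  have y: "y \<in> entries (cell T r' ct)" using assms False T1_cell by auto
  have "y < hentry (cell T r ct)" using HVT_col_entries[OF H assms(1) ct_cells_r lt y hentry_in_entries] .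
  then show ?thesis using hentry_r_ct by simp
qed

lemma below_ct_lt_g:
  assumes "J \<noteq> {}" "(r', ct) \<in> cells T" "r' \<le> r" "y \<in> entries (cell T1 r' ct)" "z \<in> entries g"
  shows "y < z"
proof -
  have cg: "(Suc r, ct) \<in> cells T" using ct_cell[OF assms(1)] .
  show ?thesis
  proof (cases "r' = r \<and> ct = c")
    case True
    then have "y \<in> entries (cell T r c)" using assms T1_cell hr_sub c_cell(2) by auto
    moreover have "(Suc r, c) \<in> cells T" "z \<in> entries (cell T (Suc r) c)" using True cg assms(5) by auto
    ultimately show ?thesis using HVT_col_entries[OF H c_cell(1)] by simp
  next
    case False
    then have "y \<in> entries (cell T r' ct)" using assms T1_cell by auto
    then show ?thesis using HVT_col_entries[OF H assms(2) cg _ _ assms(5)] assms(3) by simp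
  qed
qed

lemma M_below_g: assumes "J \<noteq> {}" "ct = c" "z \<in> set M" shows "z < hentry g"
proof -
  have cg: "(Suc r, c) \<in> cells T" using ct_cell[OF assms(1)] assms(2) by simp
  have "z \<in> entries (cell T r c)" using M_facts(1) assms(3) c_cell(2) by auto
  then show ?thesis using HVT_col_entries[OF H c_cell(1) cg _ _ hentry_in_entries] assms(2) by simp
qed

lemma left_cells_le_hn:
  assumes "(Suc r, c') \<in> cells T1" "c' < ct"
  shows "hmax (cell T1 (Suc r) c') \<le> hmin hn"
proof -
  have a: "(Suc r, c') \<in> cells T" and eq: "cell T1 (Suc r) c' = cell T (Suc r) c'"
    using assms(1) T1_cell by auto
  have hl: "hmax (cell T (Suc r) c') \<le> l" using left_of_ct_le_l[OF a assms(2)] hmax_le_iff by blast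
  show ?thesis unfolding eq hmin_ge_iff
  proof
    fix z assume "z \<in> entries hn"
    from hn_entries_cases[OF this] show "hmax (cell T (Suc r) c') \<le> z"
    proof (elim disjE conjE)
      assume "J \<noteq> {}" "z \<in> entries g"
      then show ?thesis using HVT_row[OF H a ct_cell assms(2)] hmin_le[of z g] by simp
    qed (use hl M_facts(2) in \<open>auto intro: order_trans\<close>)
  qed
qed

lemma hn_le_right_cells:
  assumes J: "J \<noteq> {}" and a: "(Suc r, c') \<in> cells T1" "ct < c'"
  shows "hmax hn \<le> hmin (cell T1 (Suc r) c')"
proof -
  have a': "(Suc r, c') \<in> cells T" and eq: "cell T1 (Suc r) c' = cell T (Suc r) c'"
    using a(1) T1_cell by auto
  have gm: "hmax g \<le> hmin (cell T (Suc r) c')" using HVT_row[OF H ct_cell[OF J] a' a(2)] .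
  show ?thesis unfolding eq hmax_le_iff
  proof
    fix z assume "z \<in> entries hn"
    from hn_entries_cases[OF this] show "z \<le> hmin (cell T (Suc r) c')"
    proof (elim disjE conjE)
      assume "z = l" then show ?thesis using k_facts[OF J] le_hmax[of k g] gm by simp
    next
      assume "z \<in> entries g" then show ?thesis using le_hmax[of z g] gm by simp
    next
      assume "ct = c" "z \<in> set M"
      then show ?thesis using M_below_g[OF J] le_hmax[OF hentry_in_entries, of g] gm by fastforce
    qed
  qed
qed

lemma lower_cells_lt_hn:
  assumes "(r', ct) \<in> cells T" "r' \<le> r"
  shows "hmax (cell T1 r' ct) < hmin hn"
  unfolding hmin_gt_iff hmax_lt_iff
proof (intro ballI)
  fix z y assume z: "z \<in> entries hn" and y: "y \<in> entries (cell T1 r' ct)"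
  have yl: "y < l" using below_ct_lt_l[OF assms y] .
  from hn_entries_cases[OF z] show "y < z"
  proof (elim disjE conjE)
    assume "J \<noteq> {}" "z \<in> entries g" then show ?thesis using below_ct_lt_g[OF _ assms y] by simp
  qed (use yl M_facts(2) in \<open>auto intro: less_le_trans\<close>)
qed

lemma hn_lt_upper_cells:
  assumes J: "J \<noteq> {}" and a: "(r', ct) \<in> cells T1" "Suc r < r'"
  shows "hmax hn < hmin (cell T1 r' ct)"
proof -
  have a': "(r', ct) \<in> cells T" and eq: "cell T1 r' ct = cell T r' ct" using a T1_cell by auto
  have above_g: "\<And>z. z \<in> entries g \<Longrightarrow> z < hmin (cell T r' ct)"
    using HVT_col_entries[OF H ct_cell[OF J] a' a(2)] hmin_gt_iff by blast
  show ?thesis unfolding eq hmax_lt_iff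
  proof
    fix z assume "z \<in> entries hn"
    from hn_entries_cases[OF this] show "z < hmin (cell T r' ct)"
    proof (elim disjE conjE)
      assume "z = l"
      then show ?thesis using k_facts[OF J] above_g[of k] by simp
    next
      assume "ct = c" "z \<in> set M"
      then have "z \<in> entries (cell T r c)" using M_facts(1) c_cell(2) by auto
      then show ?thesis using HVT_col_entries[OF H c_cell(1)] a' a(2) \<open>ct = c\<close> hmin_gt_iff
        by (metis Suc_lessD)
    qed (use above_g in blast)
  qed
qed

lemma bump_HVT: "is_HVT (bump T)"
proof (cases "J = {}")
  case False
  have "is_HVT (update_cell T1 (Suc r) ct hn)"
    using ct_cell[OF False]
    by (intro HVT_update_cell[OF T1_HVT _ hn_valid] left_cells_le_hn hn_le_right_cells[OF False]
        lower_cells_lt_hn hn_lt_upper_cells[OF False]) auto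
  then show ?thesis using bump_split False by simp
next
  case True
  have "length (T1 ! (Suc r - 2)) = length R"
    using r_ge1 r_le R_eq by (simp add: update_cell_def nth_list_update)
  then have "is_HVT (append_cell T1 (Suc r) hn)"
    using r_ge1 r_le new_len[OF True] c_props(2) ct_new[OF True]
    by (intro HVT_append_cell[OF T1_HVT _ _ _ hn_valid] left_cells_le_hn)
      (auto simp: get_row_T1 R1_cells intro: lower_cells_lt_hn[unfolded ct_new[OF True]])
  then show ?thesis using bump_split True by simp
qed

lemma T1_row_r: "get_row T1 r = R[c - 1 := hr]"
  using r_ge1 r_le R_eq by (simp add: get_row_update_cell) (simp add: bump_R_def get_row_def)

lemma T1_row_other: "t \<noteq> r \<Longrightarrow> get_row T1 t = get_row T t"
  using get_row_update_cell[OF r_ge1, of T c hr t] by simp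

lemma row_bump:
  "get_row (bump T) t = (if t = r then R[c - 1 := hr]
     else if t = Suc r then (if J = {} then R1 @ [hn] else R1[ct - 1 := hn]) else get_row T t)"
proof (cases "J = {}")
  case True
  have e: "get_row (bump T) t = (if t = Suc r then get_row T1 (Suc r) @ [hn] else get_row T1 t)"
    using bump_split True get_row_append_cell[of "Suc r" T1 hn t] r_le by simp
  show ?thesis
  proof (cases "t = Suc r")
    case True
    then show ?thesis using e get_row_T1 \<open>J = {}\<close> by simp
  next
    case False
    then show ?thesis using e T1_row_r T1_row_other[of t] by (cases "t = r") simp_all
  qed
next
  case False
  have e: "get_row (bump T) t = (if t = Suc r then (get_row T1 (Suc r))[ct - 1 := hn] else get_row T1 t)"
    using bump_split False get_row_update_cell[of "Suc r" T1 ct hn t] by simp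
  show ?thesis
  proof (cases "t = Suc r")
    case True
    then show ?thesis using e get_row_T1 \<open>J \<noteq> {}\<close> by simp
  next
    case F: False
    then show ?thesis using e T1_row_r T1_row_other[of t] by (cases "t = r") simp_all
  qed
qed

lemma row_legs_count_bump_r: "row_legs_count (bump T) r + 1 = row_legs_count T r"
proof -
  have c1: "c - 1 < length R" using c_props(1,2) by simp
  have hc: "R ! (c - 1) = h" by (simp add: bump_h_def)
  have "length (hleg hr) + 1 = length (hleg h)"
    using hr_leg l_leg length_remove1[of l "hleg h"] length_pos_if_in_set[OF l_leg] by simp
  then show ?thesis using leg_count_update[OF c1, of hr] hc row_bump[of r]
    by (simp add: row_legs_count_def bump_R_def)
qed

lemma leg_count_R1: "leg_count R1 = 0"
  using row_legs_count_above[of "Suc r"] by (simp add: row_legs_count_def bump_R1_def)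

lemma row_legs_count_bump_r1: "row_legs_count (bump T) (Suc r) = (if J = {} then 0 else 1)"
proof (cases "J = {}")
  case True
  then show ?thesis
    using row_bump[of "Suc r"] leg_count_R1 hn_leg by (simp add: row_legs_count_def leg_count_append)
next
  case False
  have i: "ct - 1 < length R1" using ct_cell[OF False] R1_cells by auto
  have "R1 ! (ct - 1) = g" using g_cell_eq[OF False] .
  then show ?thesis
    using False row_bump[of "Suc r"] leg_count_R1 hn_leg leg_count_update[OF i, of hn] g_leg[OF False]
    by (simp add: row_legs_count_def)
qed

lemma row_legs_count_bump_other: "t \<noteq> r \<Longrightarrow> t \<noteq> Suc r \<Longrightarrow> row_legs_count (bump T) t = row_legs_count T t"
  using row_bump[of t] by (simp add: row_legs_count_def)

lemma length_bump: "length (bump T) = (if J = {} \<and> r = length T then Suc (length T) else length T)"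
proof (cases "J = {}")
  case True
  then show ?thesis using bump_split length_append_cell[of "Suc r" T1 hn] r_le r_ge1 by auto
next
  case False
  then show ?thesis using bump_split R1_ne_len J_sub ct_J by (auto simp: update_cell_def)
qed

lemma excess_bump: "leg_excess (bump T) + 1 = leg_excess T + (if J = {} then 0 else 1)"
proof -
  let ?N = "Suc (length T)"
  have e1: "leg_excess (bump T) = (\<Sum>t\<in>{1..?N}. row_legs_count (bump T) t)"
    by (rule leg_excess_eq_sum_rows) (simp add: length_bump)
  have e2: "leg_excess T = (\<Sum>t\<in>{1..?N}. row_legs_count T t)" by (rule leg_excess_eq_sum_rows) simp
  have "(\<Sum>t\<in>{1..?N}. row_legs_count (bump T) t) + row_legs_count T r + row_legs_count T (Suc r)
        = (\<Sum>t\<in>{1..?N}. row_legs_count T t) + row_legs_count (bump T) r + row_legs_count (bump T) (Suc r)"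
    by (rule sum_eq_except_two) (use r_ge1 r_le row_legs_count_bump_other in auto)
  then show ?thesis
    using e1 e2 row_legs_count_bump_r row_legs_count_bump_r1 row_legs_count_above[of "Suc r"] by simp
qed

lemma shape_bump_inside: "J \<noteq> {} \<Longrightarrow> shape (bump T) = shape T"
  using bump_split by simp

lemma cells_bump_new_cell:
  assumes "J = {}"
  shows "cells (bump T) = insert (Suc r, Suc (length R1)) (cells T)"
    "(Suc r, Suc (length R1)) \<notin> cells T"
proof -
  show "cells (bump T) = insert (Suc r, Suc (length R1)) (cells T)"
    using bump_split assms cells_append_cell[of "Suc r" T1 hn] r_le get_row_T1 by simp
  show "(Suc r, Suc (length R1)) \<notin> cells T" using R1_cells[of "Suc (length R1)"] by (meson Suc_n_not_le_n)
qed

lemma shape_bump_new_cell: assumes "J = {}" shows "shape (bump T) \<noteq> shape T"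
proof
  assume "shape (bump T) = shape T"
  then have "cells (bump T) = cells T" by (simp add: cells_def)
  with cells_bump_new_cell[OF assms] show False by blast
qed

lemma row_entries_bump_r1: "insert l (row_entries T (Suc r)) \<subseteq> row_entries (bump T) (Suc r)"
proof -
  have hn_in: "hn \<in> set (get_row (bump T) (Suc r))"
    using row_bump[of "Suc r"] ct_cell R1_cells by (cases "J = {}") (auto intro: set_update_memI)
  have "row_entries T (Suc r) \<subseteq> row_entries (bump T) (Suc r)"
  proof
    fix z assume "z \<in> row_entries T (Suc r)"
    then obtain x where x: "x \<in> set R1" "z \<in> entries x" by (auto simp: row_entries_def bump_R1_def)
    show "z \<in> row_entries (bump T) (Suc r)"
    proof (cases "J = {}")
      case True
      then show ?thesis using x row_bump[of "Suc r"] by (auto simp: row_entries_def)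
    next
      case False
      have "ct - 1 < length R1" using ct_cell[OF False] R1_cells by auto
      then have "x \<in> set (R1[ct - 1 := hn]) \<or> x = g"
        using in_set_list_update_cases[OF x(1)] g_cell_eq[OF False] by metis
      then show ?thesis using x hn_in g_entries_in_hn[OF False] row_bump[of "Suc r"] False
        by (auto simp: row_entries_def)
    qed
  qed
  then show ?thesis using hn_in l_in_hn by (auto simp: row_entries_def)
qed

lemma row_entries_bump_r: assumes "z \<in> row_entries T r" "z < l" shows "z \<in> row_entries (bump T) r"
proof -
  obtain x where x: "x \<in> set R" "z \<in> entries x" using assms unfolding row_entries_def bump_R_def by blast
  have c1: "c - 1 < length R" using c_props(1,2) by simp
  have "x \<in> set (R[c - 1 := hr]) \<or> x = h" using in_set_list_update_cases[OF x(1) c1] by (simp add: bump_h_def)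
  moreover have "hr \<in> set (R[c - 1 := hr])" using set_update_memI[OF c1] .
  ultimately show ?thesis using x hr_keep assms(2) row_bump[of r] by (auto simp: row_entries_def)
qed

lemma row_legs_bump_r: assumes "y \<in> row_legs (bump T) r" shows "y < l"
proof -
  obtain x where x: "x \<in> set (R[c - 1 := hr])" "y \<in> set (hleg x)"
    using assms row_bump[of r] unfolding row_legs_def by auto
  then obtain i where i: "i < length R" "R[c - 1 := hr] ! i = x" by (auto simp: in_set_conv_nth)
  show ?thesis
  proof (cases "i = c - 1")
    case True
    then have "x = hr" using i c_props(1,2) by simp
    then show ?thesis using x hr_leg strict_sorted_remove1_lt[OF valid_hookD(4)[OF h_valid]]
      by (simp add: bump_l_def)
  next
    case False
    then have "x = cell T r (Suc i)" "(r, Suc i) \<in> cells T" "Suc i \<noteq> c"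
      using i r_cell[of "Suc i"] r_cells by auto
    then show ?thesis using legs_lt x by simp
  qed
qed

lemma row_legs_bump_r1: "row_legs (bump T) (Suc r) = (if J = {} then {} else {k})"
proof (cases "J = {}")
  case True
  have "\<forall>x\<in>set R1. hleg x = []" using leg_count_R1 unfolding leg_count_0_iff .
  then show ?thesis using True row_bump[of "Suc r"] hn_leg by (auto simp: row_legs_def)
next
  case False
  have all: "\<forall>x\<in>set R1. hleg x = []" using leg_count_R1 unfolding leg_count_0_iff .
  have i2: "ct - 1 < length R1" using ct_cell[OF False] R1_cells by auto
  have "row_legs (bump T) (Suc r) = (\<Union>x\<in>set (R1[ct - 1 := hn]). set (hleg x))"
    using row_bump[of "Suc r"] False by (simp add: row_legs_def)
  also have "\<dots> = {k}"
  proof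
    show "(\<Union>x\<in>set (R1[ct - 1 := hn]). set (hleg x)) \<subseteq> {k}"
    proof
      fix y assume "y \<in> (\<Union>x\<in>set (R1[ct - 1 := hn]). set (hleg x))"
      then obtain x where x: "x \<in> set (R1[ct - 1 := hn])" "y \<in> set (hleg x)" by blast
      then have "x \<in> insert hn (set R1)" using set_update_subset_insert[of R1 "ct - 1" hn] by blast
      then show "y \<in> {k}" using x(2) all hn_leg False by (cases "x = hn") auto
    qed
    have "k \<in> set (hleg hn)" using hn_leg False by simp
    then show "{k} \<subseteq> (\<Union>x\<in>set (R1[ct - 1 := hn]). set (hleg x))"
      using set_update_memI[OF i2, of hn] by blast
  qed
  finally show ?thesis using False by simp
qed

lemma l_row_legs: "l \<in> row_legs T r" "\<And>y. y \<in> row_legs T r \<Longrightarrow> y \<le> l"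
  using row_legs_iff[of _ T r] legs_le c_cell l_leg by auto

lemma leg_excess_bump_inside: "J \<noteq> {} \<Longrightarrow> leg_excess (bump T) = leg_excess T"
  using excess_bump by simp

lemma leg_excess_bump_new_cell: "J = {} \<Longrightarrow> leg_excess (bump T) + 1 = leg_excess T"
  using excess_bump by simp

lemma top_leg_row_bump_inside: assumes "J \<noteq> {}" shows "top_leg_row (bump T) = Suc r"
proof (rule top_leg_row_eqI)
  show "1 \<le> Suc r" by simp
  have "R1 \<noteq> []" using J_sub ct_J[OF assms] by auto
  then show "Suc r \<le> length (bump T)" using R1_ne_len length_bump by simp
  show "0 < row_legs_count (bump T) (Suc r)" using row_legs_count_bump_r1 assms by simp
  show "row_legs_count (bump T) t = 0" if "Suc r < t" for t
    using that row_legs_count_bump_other row_legs_count_above by simp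
qed

lemma bump_l_bump_inside: assumes "J \<noteq> {}" shows "bump_l (bump T) = k"
proof -
  interpret B: bump_step "bump T"
    using bump_HVT leg_excess_bump_inside[OF assms] E by unfold_locales auto
  have "bump_l (bump T) \<in> row_legs (bump T) (Suc r)"
    using B.l_row_legs(1) top_leg_row_bump_inside[OF assms] by simp
  then show ?thesis using row_legs_bump_r1 assms by simp
qed

lemma row_bump_other: "t \<noteq> r \<Longrightarrow> t \<noteq> Suc r \<Longrightarrow> get_row (bump T) t = get_row T t"
  using row_bump[of t] by simp

end

section \<open>The bumping path of one insertion\<close>

definition bump_iter :: "tab \<Rightarrow> nat \<Rightarrow> tab" where "bump_iter P i = (Vb ^^ i) P"

lemma bump_iter_0[simp]: "bump_iter P 0 = P" by (simp add: bump_iter_def)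
lemma bump_iter_Suc: "bump_iter P (Suc i) = Vb (bump_iter P i)" by (simp add: bump_iter_def)
lemma Vb_bump: "0 < leg_excess X \<Longrightarrow> Vb X = bump X" by (simp add: Vb_def)

text \<open>After \<open>i\<close> steps from \<open>P\<close> the path has climbed \<open>i\<close> rows, and the values
  \<open>l\<^sub>0 < l\<^sub>1 < \<dots>\<close> bumped so far stay in the rows they were bumped into.\<close>

definition path_inv :: "tab \<Rightarrow> nat \<Rightarrow> bool" where
  "path_inv P i \<longleftrightarrow> is_HVT (bump_iter P i) \<and> leg_excess (bump_iter P i) = leg_excess P
    \<and> shape (bump_iter P i) = shape P
    \<and> top_leg_row (bump_iter P i) = top_leg_row P + i
    \<and> (\<forall>t. top_leg_row P < t \<and> t < top_leg_row P + i \<longrightarrow> row_legs_count (bump_iter P i) t = 0)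
    \<and> (0 < i \<longrightarrow> row_legs_count (bump_iter P i) (top_leg_row P + i) = 1
         \<and> row_legs_count (bump_iter P i) (top_leg_row P) + 1 = row_legs_count P (top_leg_row P)
         \<and> (\<forall>y \<in> row_legs (bump_iter P i) (top_leg_row P). y < bump_l P))
    \<and> (\<forall>j<i. bump_l (bump_iter P j) \<in> row_entries (bump_iter P i) (top_leg_row P + j + 1)
         \<and> bump_l (bump_iter P j) < bump_l (bump_iter P (Suc j)))"

lemma path_inv_0: "is_HVT P \<Longrightarrow> path_inv P 0" by (simp add: path_inv_def)

lemma path_inv_bump_step: "path_inv P i \<Longrightarrow> 0 < leg_excess P \<Longrightarrow> bump_step (bump_iter P i)"
  unfolding path_inv_def by unfold_locales auto

lemma path_inv_bump:
  assumes I: "path_inv P i" and E: "0 < leg_excess P"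
  defines "Y \<equiv> bump (bump_iter P i)"
  shows "\<And>t. top_leg_row P < t \<Longrightarrow> t \<le> top_leg_row P + i \<Longrightarrow> row_legs_count Y t = 0"
    and "row_legs_count Y (top_leg_row P) + 1 = row_legs_count P (top_leg_row P)"
    and "\<And>y. y \<in> row_legs Y (top_leg_row P) \<Longrightarrow> y < bump_l P"
    and "\<And>j. j \<le> i \<Longrightarrow> bump_l (bump_iter P j) \<in> row_entries Y (top_leg_row P + j + 1)"
proof -
  let ?X = "bump_iter P i" and ?r = "top_leg_row P"
  have I1: "is_HVT ?X" "leg_excess ?X = leg_excess P" "top_leg_row ?X = ?r + i"
    "\<And>t. ?r < t \<Longrightarrow> t < ?r + i \<Longrightarrow> row_legs_count ?X t = 0"
    "0 < i \<Longrightarrow> row_legs_count ?X (?r + i) = 1" "0 < i \<Longrightarrow> row_legs_count ?X ?r + 1 = row_legs_count P ?r"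
    "0 < i \<Longrightarrow> \<forall>y \<in> row_legs ?X ?r. y < bump_l P"
    "\<And>j. j < i \<Longrightarrow> bump_l (bump_iter P j) \<in> row_entries ?X (?r + j + 1)"
    "\<And>j. j < i \<Longrightarrow> bump_l (bump_iter P j) < bump_l (bump_iter P (Suc j))"
    using I unfolding path_inv_def by auto
  interpret X: bump_step ?X using I1(1,2) E by unfold_locales auto
  have other: "get_row Y t = get_row ?X t" if "t \<noteq> ?r + i" "t \<noteq> Suc (?r + i)" for t
    using X.row_bump_other that I1(3) by (simp add: Y_def)
  show "row_legs_count Y t = 0" if "?r < t" "t \<le> ?r + i" for t
  proof (cases "t = ?r + i")
    case True
    then show ?thesis using X.row_legs_count_bump_r I1(3,5) that by (simp add: Y_def)
  next
    case False
    then show ?thesis using other[of t] I1(4) that by (simp add: row_legs_count_def)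
  qed
  show "row_legs_count Y ?r + 1 = row_legs_count P ?r"
    using X.row_legs_count_bump_r I1(3,6) other[of ?r]
    by (cases "i = 0") (simp_all add: Y_def row_legs_count_def)
  show "y < bump_l P" if "y \<in> row_legs Y ?r" for y
    using X.row_legs_bump_r I1(3,7) other[of ?r] that by (cases "i = 0") (auto simp: Y_def row_legs_def)
  show "bump_l (bump_iter P j) \<in> row_entries Y (?r + j + 1)" if ji: "j \<le> i" for j
  proof -
    consider "j = i" | "Suc j = i" | "Suc j < i"
      by (cases "j = i"; cases "Suc j = i") (use ji in auto)
    then show ?thesis
    proof cases
      case 1
      then show ?thesis using X.row_entries_bump_r1 I1(3) by (auto simp: Y_def)
    next
      case 2
      then have "bump_l (bump_iter P j) \<in> row_entries ?X (top_leg_row ?X)"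
        and "bump_l (bump_iter P j) < bump_l ?X"
        using I1(3) I1(8,9)[of j] by auto
      then show ?thesis using X.row_entries_bump_r 2 I1(3) by (auto simp: Y_def)
    next
      case 3
      then show ?thesis using other[of "?r + j + 1"] I1(8) by (simp add: row_entries_def)
    qed
  qed
qed

lemma path_inv_Suc:
  assumes I: "path_inv P i" and E: "0 < leg_excess P" and J: "bump_J (bump_iter P i) \<noteq> {}"
  shows "path_inv P (Suc i)"
proof -
  let ?X = "bump_iter P i" and ?r = "top_leg_row P"
  have I1: "is_HVT ?X" "leg_excess ?X = leg_excess P" "shape ?X = shape P" "top_leg_row ?X = ?r + i"
    "\<And>j. j < i \<Longrightarrow> bump_l (bump_iter P j) < bump_l (bump_iter P (Suc j))"
    using I unfolding path_inv_def by auto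
  interpret X: bump_step ?X using I1(1,2) E by unfold_locales auto
  have SS: "bump_iter P (Suc i) = bump ?X" using bump_iter_Suc Vb_bump I1(2) E by simp
  have "bump_l ?X < bump_l (bump ?X)" using X.bump_l_bump_inside[OF J] X.k_facts(2)[OF J] by simp
  then have "\<forall>j<Suc i. bump_l (bump_iter P j) < bump_l (bump_iter P (Suc j))"
    using I1(5) SS by (auto simp: less_Suc_eq)
  moreover have "row_legs_count (bump ?X) (?r + Suc i) = 1" using X.row_legs_count_bump_r1 J I1(4) by simp
  moreover note path_inv_bump[OF I E]
  ultimately show ?thesis unfolding path_inv_def SS
    using X.bump_HVT X.leg_excess_bump_inside[OF J] X.shape_bump_inside[OF J]
      X.top_leg_row_bump_inside[OF J] I1(2-4) by (auto simp: less_Suc_eq_le)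
qed

lemma path_inv_upto:
  assumes "is_HVT P" "0 < leg_excess P" "\<forall>i'<i. bump_J (bump_iter P i') \<noteq> {}"
  shows "path_inv P i"
  using assms(3)
proof (induction i)
  case 0 then show ?case using path_inv_0[OF assms(1)] by simp
next
  case (Suc i)
  then show ?case using path_inv_Suc[OF _ assms(2)] by simp
qed

text \<open>The bumping path climbs one row per step, so it reaches a new cell before leaving the tableau.\<close>

lemma bump_path_ends:
  assumes "is_HVT P" "0 < leg_excess P"
  shows "\<exists>i. bump_J (bump_iter P i) = {}"
proof (rule ccontr)
  assume "\<not> ?thesis"
  then have I: "path_inv P (length P)" using path_inv_upto[OF assms] by blast
  interpret X: bump_step "bump_iter P (length P)" using path_inv_bump_step[OF I assms(2)] .
  have "top_leg_row (bump_iter P (length P)) = top_leg_row P + length P"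
    and shp: "shape (bump_iter P (length P)) = shape P" using I by (simp_all add: path_inv_def)
  moreover have "length (bump_iter P (length P)) = length P" by (metis length_shape shp)
  ultimately show False using X.r_le top_leg_row_props(1)[OF assms(2)] by simp
qed

definition path_length :: "tab \<Rightarrow> nat" where
  "path_length P = (LEAST i. bump_J (bump_iter P i) = {})"

lemma path_length_props:
  assumes "is_HVT P" "0 < leg_excess P"
  shows "bump_J (bump_iter P (path_length P)) = {}"
    "\<And>i. i < path_length P \<Longrightarrow> bump_J (bump_iter P i) \<noteq> {}" "path_inv P (path_length P)"
proof -
  obtain i where "bump_J (bump_iter P i) = {}" using bump_path_ends[OF assms] by blast
  then show "bump_J (bump_iter P (path_length P)) = {}" unfolding path_length_def by (rule LeastI)
  show nn: "\<And>i. i < path_length P \<Longrightarrow> bump_J (bump_iter P i) \<noteq> {}"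
    unfolding path_length_def using not_less_Least by blast
  show "path_inv P (path_length P)" using path_inv_upto[OF assms] nn by blast
qed

lemma funpow_fixpoint: "f x = x \<Longrightarrow> (f ^^ n) x = x"
  by (induction n) auto

lemma V_eq_bump_path:
  assumes H: "is_HVT P" and E: "0 < leg_excess P"
  shows "V P = bump (bump_iter P (path_length P))"
proof -
  let ?d = "path_length P"
  have J: "bump_J (bump_iter P ?d) = {}" and I: "path_inv P ?d"
    using path_length_props[OF H E] by auto
  have shp: "shape (bump_iter P i) = shape P" if "i \<le> ?d" for i
    using that path_inv_upto[OF H E] path_length_props(2)[OF H E] by (simp add: path_inv_def)
  interpret X: bump_step "bump_iter P ?d" using path_inv_bump_step[OF I E] .
  have last: "bump_iter P (Suc ?d) = bump (bump_iter P ?d)"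
    using bump_iter_Suc Vb_bump I E by (simp add: path_inv_def)
  have shd: "shape (bump_iter P (Suc ?d)) \<noteq> shape P"
    using last X.shape_bump_new_cell[OF J] shp[of ?d] by simp
  have "(LEAST d. 1 \<le> d \<and> V_stop P d) = Suc ?d"
  proof (rule Least_equality)
    show "1 \<le> Suc ?d \<and> V_stop P (Suc ?d)" using shd by (simp add: V_stop_def bump_iter_def)
  next
    fix y assume y: "1 \<le> y \<and> V_stop P y"
    show "Suc ?d \<le> y"
    proof (rule ccontr)
      assume "\<not> Suc ?d \<le> y"
      moreover obtain y' where y': "y = Suc y'" using y by (cases y) auto
      ultimately have y'd: "y' < ?d" by simp
      have "Vb (bump_iter P y') = bump_iter P y'"
        using y shp[of y] y'd by (simp add: y' V_stop_def bump_iter_def)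
      then have "(Vb ^^ (Suc ?d - y')) (bump_iter P y') = bump_iter P y'" by (rule funpow_fixpoint)
      moreover have "(Vb ^^ (Suc ?d - y' + y')) P = (Vb ^^ (Suc ?d - y')) (bump_iter P y')"
        by (simp add: bump_iter_def funpow_add)
      ultimately have "bump_iter P (Suc ?d) = bump_iter P y'"
        using y'd by (simp add: bump_iter_def)
      then show False using shd shp[of y'] y'd by simp
    qed
  qed
  then show ?thesis using last by (simp add: V_def bump_iter_def)
qed

definition insertion_cell :: "tab \<Rightarrow> nat \<times> nat" where
  "insertion_cell P = (top_leg_row P + path_length P + 1,
     Suc (length (bump_R1 (bump_iter P (path_length P)))))"

lemma V_props:
  assumes H: "is_HVT P" and E: "0 < leg_excess P"
  shows "is_HVT (V P)" "leg_excess (V P) + 1 = leg_excess P"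
    "cells (V P) = insert (insertion_cell P) (cells P)" "insertion_cell P \<notin> cells P"
    "\<And>t. top_leg_row P < t \<Longrightarrow> row_legs_count (V P) t = 0"
    "row_legs_count (V P) (top_leg_row P) + 1 = row_legs_count P (top_leg_row P)"
    "\<And>y. y \<in> row_legs (V P) (top_leg_row P) \<Longrightarrow> y < bump_l P"
    "\<And>j. j \<le> path_length P \<Longrightarrow> bump_l (bump_iter P j) \<in> row_entries (V P) (top_leg_row P + j + 1)"
    "\<And>j. j < path_length P \<Longrightarrow> bump_l (bump_iter P j) < bump_l (bump_iter P (Suc j))"
proof -
  let ?d = "path_length P" and ?r = "top_leg_row P"
  let ?X = "bump_iter P ?d"
  have J: "bump_J ?X = {}" and I: "path_inv P ?d" using path_length_props[OF H E] by auto
  have I1: "leg_excess ?X = leg_excess P" "shape ?X = shape P" "top_leg_row ?X = ?r + ?d"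
    "\<And>j. j < ?d \<Longrightarrow> bump_l (bump_iter P j) < bump_l (bump_iter P (Suc j))"
    using I unfolding path_inv_def by auto
  interpret X: bump_step ?X using path_inv_bump_step[OF I E] .
  have VP: "V P = bump ?X" using V_eq_bump_path[OF H E] .
  have cX: "cells ?X = cells P" using I1(2) by (simp add: cells_def)
  note step = path_inv_bump[OF I E, folded VP]
  show "is_HVT (V P)" using X.bump_HVT VP by simp
  show "leg_excess (V P) + 1 = leg_excess P" using X.leg_excess_bump_new_cell[OF J] VP I1(1) by simp
  show "cells (V P) = insert (insertion_cell P) (cells P)" "insertion_cell P \<notin> cells P"
    using X.cells_bump_new_cell[OF J] VP cX I1(3) by (simp_all add: insertion_cell_def)
  show "row_legs_count (V P) t = 0" if "?r < t" for t
  proof -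
    consider "t \<le> ?r + ?d" | "t = Suc (?r + ?d)" | "Suc (?r + ?d) < t"
      by (cases "t \<le> ?r + ?d"; cases "t = Suc (?r + ?d)") auto
    then show ?thesis
      using step(1)[OF that] X.row_legs_count_bump_r1 J X.row_legs_count_bump_other[of t]
        X.row_legs_count_above[of t] I1(3) VP by cases auto
  qed
  show "row_legs_count (V P) ?r + 1 = row_legs_count P ?r"
    "\<And>y. y \<in> row_legs (V P) ?r \<Longrightarrow> y < bump_l P"
    "\<And>j. j \<le> ?d \<Longrightarrow> bump_l (bump_iter P j) \<in> row_entries (V P) (?r + j + 1)"
    using step(2-4) by auto
  show "\<And>j. j < ?d \<Longrightarrow> bump_l (bump_iter P j) < bump_l (bump_iter P (Suc j))" using I1(4) .
qed

lemma V_stop_path_length: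
  assumes H: "is_HVT P" and E: "0 < leg_excess P"
  shows "V_stop P (Suc (path_length P))"
proof -
  have "leg_excess (bump_iter P (path_length P)) = leg_excess P"
    using path_length_props(3)[OF H E] by (simp add: path_inv_def)
  then have "(Vb ^^ Suc (path_length P)) P = V P"
    using V_eq_bump_path[OF H E] Vb_bump E by (simp add: bump_iter_def)
  moreover have "shape (V P) \<noteq> shape P"
    using V_props(3,4)[OF H E] by (metis cells_def insertI1)
  ultimately show ?thesis by (simp add: V_stop_def)
qed

lemma V_legless: "leg_excess P = 0 \<Longrightarrow> V P = P"
proof -
  assume E: "leg_excess P = 0"
  then have "(LEAST d. 1 \<le> d \<and> V_stop P d) = 1"
    by (intro Least_equality) (simp_all add: V_stop_def Vb_def)
  then show "V P = P" using E by (simp add: V_def Vb_def)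
qed

section \<open>Consecutive insertions\<close>

lemma second_path_meets_first:
  assumes H: "is_HVT P" and E: "0 < leg_excess P"
    and E2: "0 < leg_excess (V P)" and B: "top_leg_row (V P) = top_leg_row P"
    and i: "i \<le> path_length P" and I: "path_inv (V P) i"
    and below: "bump_l (bump_iter (V P) i) < bump_l (bump_iter P i)"
    and above: "get_row (bump_iter (V P) i) (top_leg_row P + i + 1) = get_row (V P) (top_leg_row P + i + 1)"
  shows "bump_J (bump_iter (V P) i) \<noteq> {}" "bump_k (bump_iter (V P) i) \<le> bump_l (bump_iter P i)"
proof -
  interpret X: bump_step "bump_iter (V P) i" using path_inv_bump_step[OF I E2] .
  have "top_leg_row (bump_iter (V P) i) = top_leg_row P + i" using I B by (simp add: path_inv_def)
  then have "bump_l (bump_iter P i) \<in> row_entries (bump_iter (V P) i) (Suc (top_leg_row (bump_iter (V P) i)))"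
    using V_props(8)[OF H E i] row_entries_eq[OF above] by simp
  then show "bump_J (bump_iter (V P) i) \<noteq> {}" "bump_k (bump_iter (V P) i) \<le> bump_l (bump_iter P i)"
    using X.k_bound below by auto
qed

lemma second_path_below_first:
  assumes H: "is_HVT P" and E: "0 < leg_excess P"
    and E2: "0 < leg_excess (V P)" and B: "top_leg_row (V P) = top_leg_row P"
  shows "i \<le> path_length P \<Longrightarrow> (\<forall>i'<i. bump_J (bump_iter (V P) i') \<noteq> {})
     \<and> bump_l (bump_iter (V P) i) < bump_l (bump_iter P i)
     \<and> (\<forall>t. top_leg_row P + i < t \<longrightarrow> get_row (bump_iter (V P) i) t = get_row (V P) t)"
proof (induction i)
  case 0
  interpret Y: bump_step "V P" using V_props(1)[OF H E] E2 by unfold_locales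
  have "bump_l (V P) \<in> row_legs (V P) (top_leg_row P)" using Y.l_row_legs(1) B by simp
  then show ?case using V_props(7)[OF H E] by simp
next
  case (Suc i)
  let ?X = "bump_iter (V P) i"
  have IH: "\<forall>i'<i. bump_J (bump_iter (V P) i') \<noteq> {}" "bump_l ?X < bump_l (bump_iter P i)"
    "\<And>t. top_leg_row P + i < t \<Longrightarrow> get_row ?X t = get_row (V P) t" and id: "i < path_length P"
    using Suc by auto
  have I: "path_inv (V P) i" using path_inv_upto[OF V_props(1)[OF H E] E2 IH(1)] .
  interpret X: bump_step ?X using path_inv_bump_step[OF I E2] .
  have top: "top_leg_row ?X = top_leg_row P + i" using I B by (simp add: path_inv_def)
  have SS: "bump_iter (V P) (Suc i) = bump ?X"
    using bump_iter_Suc Vb_bump I E2 by (simp add: path_inv_def)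
  note meet = second_path_meets_first[OF H E E2 B less_imp_le[OF id] I IH(2) IH(3)[OF less_add_one]]
  have "bump_l (bump_iter (V P) (Suc i)) = bump_k ?X" using SS X.bump_l_bump_inside[OF meet(1)] by simp
  also have "\<dots> \<le> bump_l (bump_iter P i)" using meet(2) .
  also have "\<dots> < bump_l (bump_iter P (Suc i))" using V_props(9)[OF H E id] .
  finally have "bump_l (bump_iter (V P) (Suc i)) < bump_l (bump_iter P (Suc i))" .
  moreover have "get_row (bump_iter (V P) (Suc i)) t = get_row (V P) t" if "top_leg_row P + Suc i < t" for t
    using that SS X.row_bump_other[of t] IH(3)[of t] top by simp
  ultimately show ?case using IH(1) meet(1) by (auto simp: less_Suc_eq)
qed

lemma path_length_less_same_row:
  assumes H: "is_HVT P" and E: "0 < leg_excess P"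
    and E2: "0 < leg_excess (V P)" and B: "top_leg_row (V P) = top_leg_row P"
  shows "path_length P < path_length (V P)"
proof -
  let ?d = "path_length P"
  have C: "\<forall>i'<?d. bump_J (bump_iter (V P) i') \<noteq> {}"
    "bump_l (bump_iter (V P) ?d) < bump_l (bump_iter P ?d)"
    "\<And>t. top_leg_row P + ?d < t \<Longrightarrow> get_row (bump_iter (V P) ?d) t = get_row (V P) t"
    using second_path_below_first[OF H E E2 B order_refl] by auto
  have I: "path_inv (V P) ?d" using path_inv_upto[OF V_props(1)[OF H E] E2 C(1)] .
  have "bump_J (bump_iter (V P) ?d) \<noteq> {}"
    using second_path_meets_first[OF H E E2 B order_refl I C(2) C(3)] by simp
  then have "\<forall>i\<le>?d. bump_J (bump_iter (V P) i) \<noteq> {}" using C(1) by (auto simp: le_less)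
  then show ?thesis using path_length_props(1)[OF V_props(1)[OF H E] E2] by (meson not_less)
qed

section \<open>The uncrowding sequence and its recording tableau\<close>

abbreviation uc_P :: "tab \<Rightarrow> nat \<Rightarrow> tab" where "uc_P T i \<equiv> fst (uc T i)"
abbreviation uc_Q :: "tab \<Rightarrow> nat \<Rightarrow> nat \<Rightarrow> nat \<Rightarrow> nat" where "uc_Q T i \<equiv> snd (uc T i)"

definition new_cell :: "tab \<Rightarrow> nat \<Rightarrow> nat \<times> nat" where
  "new_cell T i = insertion_cell (uc_P T i)"

lemma uc_P_Suc: "uc_P T (Suc i) = V (uc_P T i)" by (simp add: Let_def)

lemma uc_Q_Suc: "uc_Q T (Suc i) a b = (if (a, b) \<in> cells (uc_P T (Suc i)) - cells (uc_P T i)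
     then a - top_leg_row (uc_P T i) else uc_Q T i a b)"
  by (simp add: Let_def)

declare uc.simps(2)[simp del]

lemma uc_HVT:
  assumes "is_HVT T"
  shows "is_HVT (uc_P T i) \<and> leg_excess (uc_P T i) = leg_excess T - i"
proof (induction i)
  case 0
  then show ?case using assms by simp
next
  case (Suc i)
  then show ?case
    using V_legless[of "uc_P T i"] V_props(1,2)[of "uc_P T i"] uc_P_Suc[of T i]
    by (cases "leg_excess (uc_P T i) = 0") auto
qed

lemma uc_P_stable: "is_HVT T \<Longrightarrow> leg_excess T \<le> i \<Longrightarrow> uc_P T (Suc i) = uc_P T i"
  using uc_HVT[of T i] V_legless uc_P_Suc by simp

lemma uc_step:
  assumes H: "is_HVT T" and i: "i < leg_excess T"
  shows "cells (uc_P T (Suc i)) = insert (new_cell T i) (cells (uc_P T i))"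
    "new_cell T i \<notin> cells (uc_P T i)"
    "1 \<le> top_leg_row (uc_P T i)" "top_leg_row (uc_P T i) < fst (new_cell T i)"
    "V_stop (uc_P T i) (Suc (path_length (uc_P T i)))"
proof -
  have "is_HVT (uc_P T i)" "0 < leg_excess (uc_P T i)" using uc_HVT[OF H, of i] i by auto
  then show "cells (uc_P T (Suc i)) = insert (new_cell T i) (cells (uc_P T i))"
    "new_cell T i \<notin> cells (uc_P T i)"
    "1 \<le> top_leg_row (uc_P T i)" "top_leg_row (uc_P T i) < fst (new_cell T i)"
    "V_stop (uc_P T i) (Suc (path_length (uc_P T i)))"
    using V_props(3,4) top_leg_row_props(1) V_stop_path_length uc_P_Suc[of T i]
    by (auto simp: new_cell_def insertion_cell_def)
qed

lemma uc_cells_mono: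
  assumes H: "is_HVT T" and "j \<le> k"
  shows "cells (uc_P T j) \<subseteq> cells (uc_P T k)"
proof (rule lift_Suc_mono_le[of "\<lambda>i. cells (uc_P T i)", OF _ \<open>j \<le> k\<close>])
  fix i
  show "cells (uc_P T i) \<subseteq> cells (uc_P T (Suc i))"
    using uc_step(1)[OF H, of i] uc_P_stable[OF H, of i] by (cases "i < leg_excess T") auto
qed

lemma new_cell_in_uc_iff:
  assumes H: "is_HVT T" and j: "j < leg_excess T"
  shows "new_cell T j \<in> cells (uc_P T k) \<longleftrightarrow> j < k"
proof
  assume "new_cell T j \<in> cells (uc_P T k)"
  then show "j < k" using uc_cells_mono[OF H, of k j] uc_step(2)[OF H j] by (meson not_less subsetD)
next
  assume "j < k"
  then show "new_cell T j \<in> cells (uc_P T k)"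
    using uc_cells_mono[OF H, of "Suc j" k] uc_step(1)[OF H j] by auto
qed

lemma uc_Q_new_cells:
  assumes H: "is_HVT T"
  shows "x \<in> cells (uc_P T i) - cells T \<Longrightarrow> \<exists>j. j < i \<and> j < leg_excess T \<and> x = new_cell T j
           \<and> uc_Q T i (fst x) (snd x) = fst x - top_leg_row (uc_P T j)"
proof (induction i)
  case 0
  then show ?case by simp
next
  case (Suc i)
  show ?case
  proof (cases "x \<in> cells (uc_P T i)")
    case True
    then show ?thesis using Suc uc_Q_Suc[of T i "fst x" "snd x"] less_SucI by fastforce
  next
    case False
    then have i: "i < leg_excess T" using Suc.prems uc_P_stable[OF H, of i] by force
    then have "x = new_cell T i" using Suc.prems False uc_step(1)[OF H i] by auto
    then show ?thesis using i Suc.prems False uc_Q_Suc[of T i "fst x" "snd x"] by auto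
  qed
qed

lemma top_leg_row_uc_Suc:
  assumes H: "is_HVT T" and j: "Suc j < leg_excess T"
  shows "top_leg_row (uc_P T (Suc j)) \<le> top_leg_row (uc_P T j)"
proof -
  have I: "is_HVT (uc_P T j)" "0 < leg_excess (uc_P T j)" "0 < leg_excess (uc_P T (Suc j))"
    using uc_HVT[OF H, of j] uc_HVT[OF H, of "Suc j"] j by auto
  then show ?thesis
    using top_leg_row_props(3)[OF I(3)] V_props(5)[OF I(1,2)] uc_P_Suc[of T j] by (metis not_le less_irrefl)
qed

lemma top_leg_row_uc_antimono:
  assumes H: "is_HVT T" and jk: "j \<le> k" "k < leg_excess T"
  shows "top_leg_row (uc_P T k) \<le> top_leg_row (uc_P T j)"
  using jk
proof (induction k rule: dec_induct)
  case (step n)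
  then show ?case using top_leg_row_uc_Suc[OF H, of n] by simp
qed simp

lemma new_cell_row_Suc:
  assumes H: "is_HVT T" and j: "Suc j < leg_excess T"
    and same: "top_leg_row (uc_P T (Suc j)) = top_leg_row (uc_P T j)"
  shows "fst (new_cell T j) < fst (new_cell T (Suc j))"
proof -
  have I: "is_HVT (uc_P T j)" "0 < leg_excess (uc_P T j)" "0 < leg_excess (uc_P T (Suc j))"
    using uc_HVT[OF H, of j] uc_HVT[OF H, of "Suc j"] j by auto
  then show ?thesis using path_length_less_same_row[OF I(1,2)] same uc_P_Suc[of T j]
    by (simp add: new_cell_def insertion_cell_def)
qed

lemma new_cell_row_strict:
  assumes H: "is_HVT T" and jk: "j < k" "k < leg_excess T"
    and same: "top_leg_row (uc_P T k) = top_leg_row (uc_P T j)"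
  shows "fst (new_cell T j) < fst (new_cell T k)"
proof -
  have "top_leg_row (uc_P T k) = top_leg_row (uc_P T j) \<longrightarrow> fst (new_cell T j) < fst (new_cell T k)"
    using Suc_leI[OF jk(1)] jk(2)
  proof (induction k rule: dec_induct)
    case base
    then show ?case using new_cell_row_Suc[OF H] jk by simp
  next
    case (step n)
    have "top_leg_row (uc_P T (Suc n)) \<le> top_leg_row (uc_P T n)"
      "top_leg_row (uc_P T n) \<le> top_leg_row (uc_P T j)"
      using top_leg_row_uc_antimono[OF H] step by auto
    then show ?case using new_cell_row_Suc[OF H, of n] step by fastforce
  qed
  then show ?thesis using same by simp
qed

lemma new_cell_earlier:
  assumes H: "is_HVT T" and j: "j < leg_excess T" "j' < leg_excess T"
    and y: "new_cell T j \<in> cells (uc_P T (Suc j'))" "new_cell T j \<noteq> new_cell T j'"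
  shows "j < j'"
  using y uc_step(1)[OF H j(2)] new_cell_in_uc_iff[OF H j(1)] by auto

lemma skew_cell_origin:
  assumes H: "is_HVT T" and x: "(r, c) \<in> cells (UP T) - cells T"
  obtains j where "j < leg_excess T" "new_cell T j = (r, c)"
    "UQ T r c = r - top_leg_row (uc_P T j)"
    "1 \<le> top_leg_row (uc_P T j)" "top_leg_row (uc_P T j) < r"
proof -
  obtain j where j: "j < leg_excess T" "(r, c) = new_cell T j"
    "uc_Q T (leg_excess T) r c = r - top_leg_row (uc_P T j)"
    using uc_Q_new_cells[OF H x[unfolded UP_def]] by (metis fst_conv snd_conv)
  then show thesis using that uc_step(3,4)[OF H j(1)] by (metis UQ_def fst_conv)
qed

lemma UQ_flagged:
  assumes H: "is_HVT T" and x: "(r, c) \<in> cells (UP T) - cells T"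
  shows "0 < UQ T r c \<and> UQ T r c \<le> r - 1"
  by (rule skew_cell_origin[OF H x]) simp

lemma UQ_row_strict:
  assumes H: "is_HVT T" and x: "(r, c) \<in> cells (UP T) - cells T" "(r, c') \<in> cells (UP T) - cells T"
    and cc: "c < c'"
  shows "UQ T r c < UQ T r c'"
proof -
  obtain j where j: "j < leg_excess T" "new_cell T j = (r, c)" "UQ T r c = r - top_leg_row (uc_P T j)"
    "top_leg_row (uc_P T j) < r"
    by (rule skew_cell_origin[OF H x(1)])
  obtain j' where j': "j' < leg_excess T" "new_cell T j' = (r, c')" "UQ T r c' = r - top_leg_row (uc_P T j')"
    by (rule skew_cell_origin[OF H x(2)])
  have "(r, c') \<in> cells (uc_P T (Suc j'))" using uc_step(1)[OF H j'(1)] j'(2) by simp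
  then have "new_cell T j \<in> cells (uc_P T (Suc j'))"
    using cells_left_closed[of r c' _ c] x(1) cc j(2) by (simp add: cells_iff)
  moreover have "new_cell T j \<noteq> new_cell T j'" using j(2) j'(2) cc by simp
  ultimately have jj: "j < j'" using new_cell_earlier[OF H j(1) j'(1)] by simp
  have "top_leg_row (uc_P T j') \<noteq> top_leg_row (uc_P T j)"
    \<comment> \<open>otherwise the later insertion would end in a strictly higher row\<close>
  proof
    assume "top_leg_row (uc_P T j') = top_leg_row (uc_P T j)"
    then have "fst (new_cell T j) < fst (new_cell T j')" using new_cell_row_strict[OF H jj j'(1)] by simp
    then show False using j(2) j'(2) by simp
  qed
  then have "top_leg_row (uc_P T j') < top_leg_row (uc_P T j)"
    using top_leg_row_uc_antimono[OF H, of j j'] jj j'(1) by simp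
  then show ?thesis using j(3,4) j'(3) by simp
qed

lemma UQ_col_strict:
  assumes H: "is_HVT T" and x: "(r, c) \<in> cells (UP T) - cells T" "(r', c) \<in> cells (UP T) - cells T"
    and rr: "r < r'"
  shows "UQ T r c < UQ T r' c"
proof -
  obtain j where j: "j < leg_excess T" "new_cell T j = (r, c)" "UQ T r c = r - top_leg_row (uc_P T j)"
    "top_leg_row (uc_P T j) < r"
    by (rule skew_cell_origin[OF H x(1)])
  obtain j' where j': "j' < leg_excess T" "new_cell T j' = (r', c)" "UQ T r' c = r' - top_leg_row (uc_P T j')"
    by (rule skew_cell_origin[OF H x(2)])
  have "is_partition (shape (uc_P T (Suc j')))" using uc_HVT[OF H] HVT_partition by blast
  moreover have "(r', c) \<in> cells (uc_P T (Suc j'))" using uc_step(1)[OF H j'(1)] j'(2) by simp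
  ultimately have "new_cell T j \<in> cells (uc_P T (Suc j'))"
    using cells_down_closed[of _ r' c r] x(1) rr j(2) by (simp add: cells_iff)
  moreover have "new_cell T j \<noteq> new_cell T j'" using j(2) j'(2) rr by simp
  ultimately have "j < j'" using new_cell_earlier[OF H j(1) j'(1)] by simp
  then have "top_leg_row (uc_P T j') \<le> top_leg_row (uc_P T j)"
    using top_leg_row_uc_antimono[OF H] j'(1) by simp
  then show ?thesis using j(3,4) j'(3) rr by simp
qed

lemma part_cells_row1: "p \<noteq> [] \<Longrightarrow> (1, j) \<in> part_cells p \<longleftrightarrow> 1 \<le> j \<and> j \<le> p ! 0"
  by (cases p) (auto simp: part_cells_def)

lemma first_part_eq_if_same_row1:
  assumes la: "is_partition la" and mu: "is_partition mu" and sub: "part_cells la \<subseteq> part_cells mu"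
    and above: "\<And>x. x \<in> part_cells mu - part_cells la \<Longrightarrow> 2 \<le> fst x"
  shows "first_part la = first_part mu"
proof -
  have row1: "(1, j) \<in> part_cells mu \<longleftrightarrow> (1, j) \<in> part_cells la" for j
    using sub above[of "(1, j)"] by auto
  show ?thesis
  proof (cases "mu = []")
    case True
    then show ?thesis using sub by (cases la) (auto simp: first_part_def part_cells_def)
  next
    case False
    have "(1, mu ! 0) \<in> part_cells mu" using part_cells_row1[OF False] partition_pos[OF mu, of 0] False by simp
    then have "la \<noteq> []" using row1 by (auto simp: part_cells_def)
    then show ?thesis
      using row1[of "mu ! 0"] row1[of "la ! 0"] part_cells_row1 partition_pos[OF mu] partition_pos[OF la] False
      by (cases la; cases mu) (auto simp: first_part_def)
  qed
qed

theorem proposition3p37: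
  fixes la :: "nat list" and T :: tab
  assumes "is_partition la"
      and "is_HVT T"
      and "shape T = la"
  shows "(\<forall>i < leg_excess T.
            (\<exists>d \<ge> 1. V_stop (fst (uc T i)) d)
          \<and> cells (fst (uc T i)) \<subseteq> cells (fst (uc T (Suc i)))
          \<and> card (cells (fst (uc T (Suc i))) - cells (fst (uc T i))) = 1)
       \<and> (\<exists>mu. is_MVT (UP T) \<and> shape (UP T) = mu \<and> part_cells la \<subseteq> part_cells mu
              \<and> flagged_increasing (UQ T) la mu)"
proof -
  note H = assms(2)
  let ?mu = "shape (UP T)"
  have steps: "(\<exists>d \<ge> 1. V_stop (uc_P T i) d) \<and> cells (uc_P T i) \<subseteq> cells (uc_P T (Suc i))
      \<and> card (cells (uc_P T (Suc i)) - cells (uc_P T i)) = 1" if "i < leg_excess T" for i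
    using uc_step[OF H that] by (auto simp: insert_Diff_if)
  have UP: "is_HVT (UP T)" "is_MVT (UP T)" using uc_HVT[OF H] by (simp_all add: UP_def is_MVT_def)
  have cells: "part_cells la = cells T" "part_cells ?mu = cells (UP T)"
    using assms(3) by (simp_all add: cells_def)
  have sub: "part_cells la \<subseteq> part_cells ?mu" using uc_cells_mono[OF H, of 0] cells by (simp add: UP_def)
  have mu: "is_partition ?mu" using HVT_partition[OF UP(1)] .
  have "2 \<le> fst x" if "x \<in> part_cells ?mu - part_cells la" for x
    using UQ_flagged[OF H, of "fst x" "snd x"] that cells by auto
  then have "first_part la = first_part ?mu" by (rule first_part_eq_if_same_row1[OF assms(1) mu sub])
  then have "flagged_increasing (UQ T) la ?mu"
    unfolding flagged_increasing_def cells
    using assms(1) mu sub cells UQ_flagged[OF H] UQ_row_strict[OF H] UQ_col_strict[OF H] by auto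
  then show ?thesis using steps UP(2) sub by blast
qed

end
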